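(* Let $D$ be a connected link diagram, let $G$ be its Tait graph (with the sign convention and choice of checkerboard coloring described in the context), and let $\mathbb{G}$ be its all-$A$ ribbon graph. Then there is a one-to-one correspondence between the quasi-trees of $\mathbb{G}$ and the spanning trees of $G$, under which a quasi-tree $\mathbb{Q}_j$ of genus $j$ corresponds to a spanning tree $T_v$ with exactly $v$ positive edges, where $$ v+j=\frac{V(G)+E_+(G)-V(\mathbb{G})}{2}. $$
   Context: Let $D$ be a connected link diagram in the plane. Each crossing can be smoothed in two ways, the $A$-smoothing and the $B$-smoothing (Kauffman's convention). A state $s$ of $D$ assigns $A$ or $B$ to each crossing; $|s|$ denotes the number of circles in the resulting smoothing. The all-$A$ state assigns $A$ to every crossing. Tait graph: checkerboard color the complementary regions of $D$. The Tait graph has a vertex for each shaded region and an edge for each crossing, joining the shaded regions that meet at that crossing. An edge is positive if the $A$-smoothing of the corresponding crossing joins the two shaded regions of its endpoints, and negative otherwise. The two checkerboard colorings give planar dual Tait graphs; $G$ denotes the one with $E_+(G)\ge E_-(G)$, where $E_\pm(G)$ is the number of positive/negative edges. $V(G)$ is the number of vertices of $G$. All-$A$ ribbon graph $\mathbb{G}$: its vertices are the circles of the all-$A$ state of $D$ (so $V(\mathbb{G})$ is the number of such circles), and it has one edge for each crossing, joining the state circle(s) containing the two arcs of the $A$-smoothing at that crossing. Orient each state circle counterclockwise if it is nested inside an even number of other state circles and clockwise otherwise; the cyclic order of edges at a vertex is the order in which their attaching points are met traversing the circle in this direction. Equivalently, $\mathbb{G}$ is the orientable surface made of one disk per vertex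 and one untwisted band per edge, realizing these cyclic orders. A spanning subgraph $\mathbb{H}\subset\mathbb{G}$ consists of all vertices of $\mathbb{G}$ and a subset of its edges, with the induced cyclic orders. $F(\mathbb{H})$ is the number of faces of $\mathbb{H}$, i.e. the number of boundary components of the orientable surface formed by the vertex disks and the bands of the edges of $\mathbb{H}$ (equivalently, the number of complementary regions of $\mathbb{H}$ in the closed orientable surface of minimal genus in which it embeds). A quasi-tree is a spanning subgraph $\mathbb{Q}$ with $F(\mathbb{Q})=1$; its genus is $j=(1-V(\mathbb{Q})+E(\mathbb{Q}))/2$, where $E(\mathbb{Q})$ is its number of edges. *)

theory Defs
  imports Complex_Main
begin

text \<open>
Combinatorial model of a connected link diagram with at least one crossing.
The diagram is a 4-valent plane map given by a finite set H of darts (half-edges),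
a permutation sg (counterclockwise rotation of the darts around each crossing) and a
fixed-point-free involution al (the two ends of an edge of the projection).
Crossings are the sg-orbits (4 darts each); faces (complementary regions) are the
orbits of al \<circ> sg; the face of a dart d is the region containing the corner from d
counterclockwise to sg d.  The predicate ov marks the two darts of the
over-strand at each crossing.  Planarity is Euler's formula V - E + F = 2.
\<close>

definition ld_orbit :: "('a \<Rightarrow> 'a) \<Rightarrow> 'a \<Rightarrow> 'a set" where
  "ld_orbit f x = {(f ^^ n) x | n. True}"

definition ld_norbits :: "('a \<Rightarrow> 'a) \<Rightarrow> 'a set \<Rightarrow> nat" where
  "ld_norbits f A = card (ld_orbit f ` A)"

definition ld_gen :: "'d set \<Rightarrow> ('d \<Rightarrow> 'd) \<Rightarrow> ('d \<Rightarrow> 'd) \<Rightarrow> ('d \<times> 'd) set" where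
  "ld_gen H sg al = {(d, sg d) | d. d \<in> H} \<union> {(d, al d) | d. d \<in> H}"

definition link_diagram ::
  "'d set \<Rightarrow> ('d \<Rightarrow> 'd) \<Rightarrow> ('d \<Rightarrow> 'd) \<Rightarrow> ('d \<Rightarrow> bool) \<Rightarrow> bool" where
  "link_diagram H sg al ov \<longleftrightarrow>
     finite H \<and> H \<noteq> {} \<and> bij_betw sg H H \<and> bij_betw al H H \<and>
     (\<forall>d\<in>H. al (al d) = d \<and> al d \<noteq> d \<and>
             (sg ^^ 4) d = d \<and> sg d \<noteq> d \<and> (sg ^^ 2) d \<noteq> d \<and>
             (ov (sg d) \<longleftrightarrow> \<not> ov d)) \<and>
     (\<forall>d\<in>H. \<forall>e\<in>H. (d, e) \<in> (ld_gen H sg al)\<^sup>*) \<and>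
     int (ld_norbits sg H) - int (card H div 2) + int (ld_norbits (al \<circ> sg) H) = 2"

definition crossings :: "'d set \<Rightarrow> ('d \<Rightarrow> 'd) \<Rightarrow> 'd set set" where
  "crossings H sg = ld_orbit sg ` H"

definition face_of :: "('d \<Rightarrow> 'd) \<Rightarrow> ('d \<Rightarrow> 'd) \<Rightarrow> 'd \<Rightarrow> 'd set" where
  "face_of sg al d = ld_orbit (al \<circ> sg) d"

text \<open>A checkerboard colouring: sh d says whether the face of (the corner at) d is shaded;
  it is constant on faces and alternates around each crossing.\<close>

definition checkerboard :: "'d set \<Rightarrow> ('d \<Rightarrow> 'd) \<Rightarrow> ('d \<Rightarrow> 'd) \<Rightarrow> ('d \<Rightarrow> bool) \<Rightarrow> bool" where
  "checkerboard H sg al sh \<longleftrightarrow>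
     (\<forall>d\<in>H. sh (al (sg d)) = sh d \<and> sh (sg d) \<noteq> sh d)"

text \<open>Tait graph of the shading sh: vertices are the shaded faces, edges are the crossings,
  a crossing joining the shaded faces meeting at it.  The A-regions at a crossing are the
  corners from an over-dart counterclockwise to the next (under) dart; the A-smoothing joins
  them, so an edge is positive iff its A-corners are shaded.\<close>

definition tait_vertices :: "'d set \<Rightarrow> ('d \<Rightarrow> 'd) \<Rightarrow> ('d \<Rightarrow> 'd) \<Rightarrow> ('d \<Rightarrow> bool) \<Rightarrow> 'd set set" where
  "tait_vertices H sg al sh = face_of sg al ` {d \<in> H. sh d}"

definition tait_ends :: "('d \<Rightarrow> 'd) \<Rightarrow> ('d \<Rightarrow> 'd) \<Rightarrow> ('d \<Rightarrow> bool) \<Rightarrow> 'd set \<Rightarrow> 'd set set" where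
  "tait_ends sg al sh c = face_of sg al ` {d \<in> c. sh d}"

definition tait_positive :: "('d \<Rightarrow> bool) \<Rightarrow> ('d \<Rightarrow> bool) \<Rightarrow> 'd set \<Rightarrow> bool" where
  "tait_positive ov sh c \<longleftrightarrow> (\<exists>d\<in>c. ov d \<and> sh d)"

definition E_plus :: "'d set \<Rightarrow> ('d \<Rightarrow> 'd) \<Rightarrow> ('d \<Rightarrow> bool) \<Rightarrow> ('d \<Rightarrow> bool) \<Rightarrow> nat" where
  "E_plus H sg ov sh = card {c \<in> crossings H sg. tait_positive ov sh c}"

definition E_minus :: "'d set \<Rightarrow> ('d \<Rightarrow> 'd) \<Rightarrow> ('d \<Rightarrow> bool) \<Rightarrow> ('d \<Rightarrow> bool) \<Rightarrow> nat" where
  "E_minus H sg ov sh = card {c \<in> crossings H sg. \<not> tait_positive ov sh c}"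

definition tait_connected ::
  "'d set \<Rightarrow> ('d \<Rightarrow> 'd) \<Rightarrow> ('d \<Rightarrow> 'd) \<Rightarrow> ('d \<Rightarrow> bool) \<Rightarrow> 'd set set \<Rightarrow> bool" where
  "tait_connected H sg al sh T \<longleftrightarrow>
     (\<forall>u\<in>tait_vertices H sg al sh. \<forall>v\<in>tait_vertices H sg al sh.
        (u, v) \<in> {(x, y). \<exists>c\<in>T. x \<in> tait_ends sg al sh c \<and> y \<in> tait_ends sg al sh c}\<^sup>*)"

text \<open>Spanning tree of the Tait (multi)graph, given by its edge set: a spanning subgraph that
  is connected and minimally so (every edge is a bridge; in particular no loops or cycles).\<close>

definition tait_spanning_tree ::
  "'d set \<Rightarrow> ('d \<Rightarrow> 'd) \<Rightarrow> ('d \<Rightarrow> 'd) \<Rightarrow> ('d \<Rightarrow> bool) \<Rightarrow> 'd set set \<Rightarrow> bool" where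
  "tait_spanning_tree H sg al sh T \<longleftrightarrow>
     T \<subseteq> crossings H sg \<and> tait_connected H sg al sh T \<and>
     (\<forall>e\<in>T. \<not> tait_connected H sg al sh (T - {e}))"

text \<open>All-A state.  At a crossing with over-darts N,S and under-darts W = sg N, E = sg S,
  the A-smoothing joins N with E = sg^3 N and W with S = sg W.\<close>

definition partnerA :: "('d \<Rightarrow> 'd) \<Rightarrow> ('d \<Rightarrow> bool) \<Rightarrow> 'd \<Rightarrow> 'd" where
  "partnerA sg ov d = (if ov d then (sg ^^ 3) d else sg d)"

definition stepA :: "('d \<Rightarrow> 'd) \<Rightarrow> ('d \<Rightarrow> 'd) \<Rightarrow> ('d \<Rightarrow> bool) \<Rightarrow> 'd \<Rightarrow> 'd" where
  "stepA sg al ov d = partnerA sg ov (al d)"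

definition allA_circles :: "'d set \<Rightarrow> ('d \<Rightarrow> 'd) \<Rightarrow> ('d \<Rightarrow> 'd) \<Rightarrow> ('d \<Rightarrow> bool) \<Rightarrow> 'd set set" where
  "allA_circles H sg al ov =
     H // (({(d, al d) | d. d \<in> H} \<union> {(d, partnerA sg ov d) | d. d \<in> H})\<^sup>*)"

definition V_ribbon :: "'d set \<Rightarrow> ('d \<Rightarrow> 'd) \<Rightarrow> ('d \<Rightarrow> 'd) \<Rightarrow> ('d \<Rightarrow> bool) \<Rightarrow> nat" where
  "V_ribbon H sg al ov = card (allA_circles H sg al ov)"

text \<open>A dart d with stepA d describes traversing the A-arc
  {al d, stepA d}; the left side of this traversal is the face of d.  Each state circle is
  oriented (counterclockwise iff nested in an even number of circles) exactly so that the
  faces on its left have the colour opposite to the colour of the unbounded region, whose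
  corner contains the dart ou.  Ribbon darts (attaching points of edges) are the darts
  traversing an A-arc in this orientation; the cyclic order at a circle is given by stepA.\<close>

definition rdarts :: "'d set \<Rightarrow> ('d \<Rightarrow> bool) \<Rightarrow> 'd \<Rightarrow> 'd set" where
  "rdarts H sh ou = {d \<in> H. sh d \<noteq> sh ou}"

text \<open>The other end of the edge (crossing) attached at ribbon dart d: the oriented traversal of
  the other A-arc at the same crossing.\<close>

definition redge ::
  "'d set \<Rightarrow> ('d \<Rightarrow> 'd) \<Rightarrow> ('d \<Rightarrow> 'd) \<Rightarrow> ('d \<Rightarrow> bool) \<Rightarrow> ('d \<Rightarrow> bool) \<Rightarrow> 'd \<Rightarrow> 'd \<Rightarrow> 'd" where
  "redge H sg al ov sh ou d =
     (if al ((sg ^^ 2) (al d)) \<in> rdarts H sh ou then al ((sg ^^ 2) (al d))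
      else al ((sg ^^ 2) (stepA sg al ov d)))"

definition rsub :: "'d set \<Rightarrow> ('d \<Rightarrow> 'd) \<Rightarrow> ('d \<Rightarrow> 'd) \<Rightarrow> ('d \<Rightarrow> bool) \<Rightarrow> 'd \<Rightarrow> 'd set set \<Rightarrow> 'd set" where
  "rsub H sg al sh ou S = {d \<in> rdarts H sh ou. ld_orbit sg (al d) \<in> S}"

text \<open>Induced cyclic order of the subgraph: next attaching point of an edge of S.\<close>

definition rrot ::
  "'d set \<Rightarrow> ('d \<Rightarrow> 'd) \<Rightarrow> ('d \<Rightarrow> 'd) \<Rightarrow> ('d \<Rightarrow> bool) \<Rightarrow> ('d \<Rightarrow> bool) \<Rightarrow> 'd \<Rightarrow> 'd set set \<Rightarrow> 'd \<Rightarrow> 'd" where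
  "rrot H sg al ov sh ou S d =
     (stepA sg al ov ^^ (LEAST k. 0 < k \<and> (stepA sg al ov ^^ k) d \<in> rsub H sg al sh ou S)) d"

text \<open>Number of faces (boundary components) of the spanning ribbon subgraph with edge set S:
  orbits of the face permutation on its darts, plus one for each vertex without edges.\<close>

definition ribbon_faces ::
  "'d set \<Rightarrow> ('d \<Rightarrow> 'd) \<Rightarrow> ('d \<Rightarrow> 'd) \<Rightarrow> ('d \<Rightarrow> bool) \<Rightarrow> ('d \<Rightarrow> bool) \<Rightarrow> 'd \<Rightarrow> 'd set set \<Rightarrow> nat" where
  "ribbon_faces H sg al ov sh ou S =
     card (ld_orbit (rrot H sg al ov sh ou S \<circ> redge H sg al ov sh ou) ` rsub H sg al sh ou S)
     + card {C \<in> allA_circles H sg al ov. C \<inter> rsub H sg al sh ou S = {}}"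

definition quasi_tree ::
  "'d set \<Rightarrow> ('d \<Rightarrow> 'd) \<Rightarrow> ('d \<Rightarrow> 'd) \<Rightarrow> ('d \<Rightarrow> bool) \<Rightarrow> ('d \<Rightarrow> bool) \<Rightarrow> 'd \<Rightarrow> 'd set set \<Rightarrow> bool" where
  "quasi_tree H sg al ov sh ou Q \<longleftrightarrow>
     Q \<subseteq> crossings H sg \<and> ribbon_faces H sg al ov sh ou Q = 1"

definition qt_genus :: "'d set \<Rightarrow> ('d \<Rightarrow> 'd) \<Rightarrow> ('d \<Rightarrow> 'd) \<Rightarrow> ('d \<Rightarrow> bool) \<Rightarrow> 'd set set \<Rightarrow> real" where
  "qt_genus H sg al ov Q = (1 - real (V_ribbon H sg al ov) + real (card Q)) / 2"

end

theory Submission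
  imports Defs "HOL-Combinatorics.Transposition"
begin

text \<open>
  For a set \<open>T\<close> of crossings consider the state of the diagram that smooths exactly the crossings
  of \<open>T\<close> so as to join the shaded regions. Its circles bound a neighbourhood of the shaded faces
  together with the edges \<open>T\<close> of the Tait graph \<open>G\<close>, and their number is \<open>2 k(T) + |T| - V(G)\<close>,
  where \<open>k(T)\<close> counts the components of \<open>(V(G), T)\<close>: adding an edge changes the right-hand side
  and the number of circles compatibly, and both sides agree for \<open>T = {}\<close> and, by Euler's
  formula, for \<open>T\<close> the set of all crossings. The all-A state is \<open>T = E\<^sub>+\<close>, and the faces of the
  spanning subgraph \<open>Q\<close> of the all-A ribbon graph are the circles of the state \<open>Q \<triangle> E\<^sub>+\<close>. Hence
  \<open>Q\<close> is a quasi-tree iff this state has a single circle, iff \<open>Q \<triangle> E\<^sub>+\<close> is a spanning tree of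
  \<open>G\<close>; its positive edges are \<open>E\<^sub>+ - Q\<close>, and counting edges yields \<open>v + j\<close>.
\<close>

section \<open>Orbits of injective self-maps of finite sets\<close>

definition perm_on :: "('a \<Rightarrow> 'a) \<Rightarrow> 'a set \<Rightarrow> bool" where
  "perm_on p A \<longleftrightarrow> finite A \<and> (\<forall>x\<in>A. p x \<in> A) \<and> inj_on p A"

lemma perm_on_mapsto: "perm_on p A \<Longrightarrow> x \<in> A \<Longrightarrow> p x \<in> A"
  by (simp add: perm_on_def)

lemma perm_on_funpow_mapsto: "perm_on p A \<Longrightarrow> x \<in> A \<Longrightarrow> (p ^^ n) x \<in> A"
  by (induction n) (auto simp: perm_on_def)

lemma perm_on_surj:
  assumes "perm_on p A" "x \<in> A"
  obtains y where "y \<in> A" "p y = x"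
proof -
  have "p ` A = A" using assms(1) unfolding perm_on_def
    by (meson endo_inj_surj image_subsetI)
  then show ?thesis using assms(2) that by (metis imageE)
qed

lemma ld_orbit_self [simp]: "x \<in> ld_orbit p x"
  unfolding ld_orbit_def by (auto intro: exI[of _ 0])

lemma ld_orbit_funpow [simp]: "(p ^^ n) x \<in> ld_orbit p x"
  unfolding ld_orbit_def by auto

lemma ld_orbit_apply [simp]: "p x \<in> ld_orbit p x"
  using ld_orbit_funpow[where n=1 and p=p and x=x] by simp

lemma ld_orbit_subset: "perm_on p A \<Longrightarrow> x \<in> A \<Longrightarrow> ld_orbit p x \<subseteq> A"
  unfolding ld_orbit_def by (auto intro: perm_on_funpow_mapsto)

lemma ld_orbit_subset_of_mem: "y \<in> ld_orbit p x \<Longrightarrow> ld_orbit p y \<subseteq> ld_orbit p x"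
proof -
  assume "y \<in> ld_orbit p x"
  then obtain m where m: "y = (p ^^ m) x" unfolding ld_orbit_def by auto
  show ?thesis unfolding ld_orbit_def
  proof
    fix z assume "z \<in> {(p ^^ n) y |n. True}"
    then obtain n where "z = (p ^^ n) y" by auto
    then have "z = (p ^^ (n + m)) x" by (simp add: m funpow_add)
    then show "z \<in> {(p ^^ n) x |n. True}" by auto
  qed
qed

lemma ld_orbit_subset_invariant:
  assumes "x \<in> S" "\<forall>z\<in>S. f z \<in> S"
  shows "ld_orbit f x \<subseteq> S"
proof -
  have "(f ^^ n) x \<in> S" for n by (induction n) (use assms in auto)
  then show ?thesis unfolding ld_orbit_def by auto
qed

lemma ld_orbit_cong:
  assumes "\<forall>z\<in>ld_orbit f x. f z = g z"
  shows "ld_orbit f x = ld_orbit g x"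
proof -
  have "(f ^^ n) x = (g ^^ n) x" for n
  proof (induction n)
    case (Suc n)
    then show ?case using assms ld_orbit_funpow[where p=f and n=n and x=x] by simp
  qed simp
  then show ?thesis unfolding ld_orbit_def by auto
qed

lemma ld_orbit_cong_invariant:
  assumes "x \<in> S" "\<forall>z\<in>S. f z \<in> S" "\<forall>z\<in>S. f z = g z"
  shows "ld_orbit f x = ld_orbit g x"
  using ld_orbit_cong ld_orbit_subset_invariant[OF assms(1,2)] assms(3) by (metis subsetD)

lemma perm_on_funpow_inj:
  assumes "perm_on p A" "a \<in> A" "b \<in> A" "(p ^^ i) a = (p ^^ i) b"
  shows "a = b"
  using assms(2-4)
proof (induction i arbitrary: a b)
  case 0 then show ?case by simp
next
  case (Suc i)
  have "(p ^^ i) (p a) = (p ^^ i) (p b)" using Suc.prems(3) by (metis funpow_Suc_right comp_apply)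
  then have "p a = p b" using Suc.IH perm_on_mapsto[OF assms(1)] Suc.prems by blast
  then show ?case using assms(1) Suc.prems unfolding perm_on_def inj_on_def by blast
qed

text \<open>Pigeonhole on \<open>x, p x, \<dots>, (p ^^ card A) x\<close>, then cancellation by injectivity.\<close>

lemma perm_on_periodic:
  assumes "perm_on p A" "x \<in> A"
  obtains n where "n > 0" "(p ^^ n) x = x"
proof -
  have fin: "finite A" using assms perm_on_def by blast
  have "\<not> inj_on (\<lambda>n. (p ^^ n) x) {0..card A}"
  proof
    assume inj: "inj_on (\<lambda>n. (p ^^ n) x) {0..card A}"
    have "(\<lambda>n. (p ^^ n) x) ` {0..card A} \<subseteq> A" using perm_on_funpow_mapsto[OF assms] by auto
    then have "card ((\<lambda>n. (p ^^ n) x) ` {0..card A}) \<le> card A" using fin card_mono by blast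
    moreover have "card ((\<lambda>n. (p ^^ n) x) ` {0..card A}) = card A + 1"
      using card_image[OF inj] by simp
    ultimately show False by simp
  qed
  then obtain i j where ij: "i < j" "(p ^^ i) x = (p ^^ j) x"
    unfolding inj_on_def by (metis linorder_neqE_nat)
  have "(p ^^ i) ((p ^^ (j - i)) x) = (p ^^ i) x"
    using ij by (metis add_diff_inverse_nat funpow_add comp_apply less_imp_not_less)
  then have "(p ^^ (j - i)) x = x"
    using perm_on_funpow_inj[OF assms(1) perm_on_funpow_mapsto[OF assms] assms(2)] by blast
  then show ?thesis using ij that[of "j - i"] by simp
qed

lemma ld_orbit_sym:
  assumes "perm_on p A" "x \<in> A" "y \<in> ld_orbit p x"
  shows "x \<in> ld_orbit p y"
proof -
  obtain m where m: "y = (p ^^ m) x" using assms(3) unfolding ld_orbit_def by auto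
  obtain N where N: "N > 0" "(p ^^ N) x = x" using perm_on_periodic[OF assms(1,2)] by blast
  have period: "(p ^^ (N * k)) x = x" for k
    by (induction k) (use N(2) in \<open>auto simp: funpow_add\<close>)
  have "m \<le> N * m" using N by simp
  have "(p ^^ (N * m - m)) y = (p ^^ (N * m - m + m)) x" by (simp add: m funpow_add)
  also have "\<dots> = x" using \<open>m \<le> N * m\<close> period by simp
  finally show ?thesis unfolding ld_orbit_def by (auto intro!: exI[of _ "N * m - m"])
qed

lemma ld_orbit_eq:
  assumes "perm_on p A" "x \<in> A" "y \<in> ld_orbit p x"
  shows "ld_orbit p y = ld_orbit p x"
  using ld_orbit_subset_of_mem[OF assms(3)] ld_orbit_subset_of_mem[OF ld_orbit_sym[OF assms]]
  by blast

lemma ld_orbit_apply_eq: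
  assumes "perm_on p A" "x \<in> A"
  shows "ld_orbit p (p x) = ld_orbit p x"
  by (rule ld_orbit_eq[OF assms]) simp

lemma ld_orbit_eq_if_meet:
  assumes "perm_on p A" "x \<in> A" "y \<in> A" "ld_orbit p x \<inter> ld_orbit p y \<noteq> {}"
  shows "ld_orbit p x = ld_orbit p y"
proof -
  obtain z where "z \<in> ld_orbit p x" "z \<in> ld_orbit p y" using assms(4) by blast
  then show ?thesis using ld_orbit_eq[OF assms(1,2)] ld_orbit_eq[OF assms(1,3)] by metis
qed

lemma ld_orbit_preimage:
  assumes "perm_on p A" "w \<in> A" "x \<in> ld_orbit p w"
  obtains y where "y \<in> ld_orbit p w" "p y = x"
proof -
  have "x \<in> A" using ld_orbit_subset[OF assms(1,2)] assms(3) by blast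
  then obtain y where y: "y \<in> A" "p y = x" using perm_on_surj[OF assms(1)] by blast
  have "ld_orbit p y = ld_orbit p x" using ld_orbit_apply_eq[OF assms(1) y(1)] y by simp
  also have "\<dots> = ld_orbit p w" using ld_orbit_eq[OF assms] .
  finally have "y \<in> ld_orbit p w" using ld_orbit_self by metis
  then show ?thesis using that y(2) by blast
qed

lemma ld_orbit_inverse:
  assumes "perm_on p A" "perm_on q A" "\<forall>x\<in>A. q (p x) = x" "x \<in> A"
  shows "ld_orbit p x = ld_orbit q x"
proof -
  have sub: "ld_orbit f x \<subseteq> ld_orbit g x"
    if f: "perm_on f A" and g: "perm_on g A" and fg: "\<forall>x\<in>A. g (f x) = x" and x: "x \<in> A" for f g x
  proof -
    have "(f ^^ n) x \<in> ld_orbit g x" for n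
    proof (induction n)
      case 0 then show ?case by simp
    next
      case (Suc n)
      let ?y = "(f ^^ n) x"
      have yA: "?y \<in> A" using perm_on_funpow_mapsto[OF f x] .
      have "?y \<in> ld_orbit g (f ?y)" using fg yA by (metis ld_orbit_apply)
      then have "ld_orbit g ?y = ld_orbit g (f ?y)"
        using ld_orbit_eq[OF g perm_on_mapsto[OF f yA]] by blast
      then have "f ?y \<in> ld_orbit g ?y" using ld_orbit_self by metis
      moreover have "ld_orbit g ?y = ld_orbit g x" using ld_orbit_eq[OF g x Suc] .
      ultimately show ?case by simp
    qed
    then show ?thesis unfolding ld_orbit_def by auto
  qed
  have "\<forall>x\<in>A. p (q x) = x"
  proof
    fix x assume "x \<in> A"
    then obtain y where "y \<in> A" "p y = x" using perm_on_surj[OF assms(1)] by blast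
    then show "p (q x) = x" using assms(3) by auto
  qed
  then show ?thesis using sub[OF assms(1,2,3,4)] sub[OF assms(2,1) _ assms(4)] by blast
qed

lemma orbits_avoiding_eq:
  assumes p: "perm_on p A" and q: "perm_on q A" and agree: "\<forall>z\<in>A - R. p z = q z"
  shows "{X \<in> ld_orbit p ` A. X \<inter> R = {}} = {X \<in> ld_orbit q ` A. X \<inter> R = {}}"
proof -
  have *: "{X \<in> ld_orbit f ` A. X \<inter> R = {}} \<subseteq> {X \<in> ld_orbit g ` A. X \<inter> R = {}}"
    if f: "perm_on f A" and fg: "\<forall>z\<in>A - R. f z = g z" for f g
  proof
    fix X assume "X \<in> {X \<in> ld_orbit f ` A. X \<inter> R = {}}"
    then obtain w where w: "w \<in> A" "X = ld_orbit f w" "X \<inter> R = {}" by blast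
    have "X \<subseteq> A" using ld_orbit_subset[OF f w(1)] w(2) by simp
    then have "\<forall>z\<in>ld_orbit f w. f z = g z" using fg w by blast
    then have "X = ld_orbit g w" using ld_orbit_cong w(2) by metis
    then show "X \<in> {X \<in> ld_orbit g ` A. X \<inter> R = {}}" using w by blast
  qed
  show ?thesis using *[OF p agree] *[of q p] q agree by auto
qed

section \<open>Composition with a transposition\<close>

lemma perm_on_comp_transpose:
  assumes "perm_on p A" "x1 \<in> A" "x2 \<in> A"
  shows "perm_on (p \<circ> transpose x1 x2) A"
proof -
  have "transpose x1 x2 ` A = A" using assms(2,3) by simp
  then have "inj_on p (transpose x1 x2 ` A)" using assms(1) by (simp add: perm_on_def)
  then have "inj_on (p \<circ> transpose x1 x2) A" by (rule comp_inj_on[OF inj_on_transpose])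
  moreover have "(p \<circ> transpose x1 x2) x \<in> A" if "x \<in> A" for x
    using that assms perm_on_mapsto by (cases "x = x1 \<or> x = x2") auto
  ultimately show ?thesis using assms(1) unfolding perm_on_def by blast
qed

lemma ld_orbit_subset_if_agree:
  assumes "perm_on p A" "a \<in> A" "p a \<in> Z" "\<forall>z\<in>Z. q z \<in> Z"
    "\<forall>w\<in>ld_orbit p a. w \<noteq> a \<longrightarrow> q w = p w"
  shows "ld_orbit p a \<subseteq> Z"
proof -
  have suc: "(p ^^ Suc j) a \<in> Z" for j
  proof (induction j)
    case 0 then show ?case using assms(3) by simp
  next
    case (Suc j)
    let ?w = "(p ^^ Suc j) a"
    have step: "(p ^^ Suc (Suc j)) a = p ?w" by (simp only: funpow.simps comp_apply)
    show ?case
    proof (cases "?w = a")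
      case True
      then show ?thesis using assms(3) step by metis
    next
      case False
      then have "q ?w = p ?w" using assms(5) ld_orbit_funpow[of "Suc j" p a] by blast
      moreover have "q ?w \<in> Z" using Suc assms(4) by blast
      ultimately show ?thesis using step by metis
    qed
  qed
  obtain N where N: "N > 0" "(p ^^ N) a = a" using perm_on_periodic[OF assms(1,2)] by blast
  have "(p ^^ n) a \<in> Z" for n
  proof (cases n)
    case 0
    have "Suc (N - 1) = N" using N by simp
    then show ?thesis using suc[of "N - 1"] N 0 by simp
  next
    case (Suc j) then show ?thesis using suc by simp
  qed
  then show ?thesis unfolding ld_orbit_def by auto
qed

lemma ld_orbit_transpose_other:
  assumes "x1 \<notin> ld_orbit p y" "x2 \<notin> ld_orbit p y"
  shows "ld_orbit (p \<circ> transpose x1 x2) y = ld_orbit p y"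
proof -
  have "\<forall>z\<in>ld_orbit p y. p z = (p \<circ> transpose x1 x2) z"
    using assms unfolding transpose_def by auto
  then show ?thesis using ld_orbit_cong by metis
qed

lemma ld_orbit_transpose_join:
  assumes p: "perm_on p A" and x1: "x1 \<in> A" and x2: "x2 \<in> A" and nx: "x2 \<notin> ld_orbit p x1"
  shows "ld_orbit (p \<circ> transpose x1 x2) x1 = ld_orbit p x1 \<union> ld_orbit p x2"
proof -
  define q where "q = p \<circ> transpose x1 x2"
  define Z where "Z = ld_orbit q x1"
  have x1O2: "x1 \<notin> ld_orbit p x2" using ld_orbit_sym[OF p x2] nx by blast
  have Zcl: "\<forall>z\<in>Z. q z \<in> Z"
    unfolding Z_def using ld_orbit_subset_of_mem ld_orbit_apply by fast
  have qx: "q x1 = p x2" "q x2 = p x1" "\<And>z. z \<noteq> x1 \<Longrightarrow> z \<noteq> x2 \<Longrightarrow> q z = p z"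
    unfolding q_def by auto
  have O2Z: "ld_orbit p x2 \<subseteq> Z"
  proof (rule ld_orbit_subset_if_agree[OF p x2 _ Zcl])
    show "p x2 \<in> Z" unfolding Z_def using qx(1) ld_orbit_apply by metis
    show "\<forall>w\<in>ld_orbit p x2. w \<noteq> x2 \<longrightarrow> q w = p w"
    proof (intro ballI impI)
      fix w assume "w \<in> ld_orbit p x2" "w \<noteq> x2"
      then show "q w = p w" using qx(3) x1O2 by metis
    qed
  qed
  have O1Z: "ld_orbit p x1 \<subseteq> Z"
  proof (rule ld_orbit_subset_if_agree[OF p x1 _ Zcl])
    have "x2 \<in> Z" using O2Z by auto
    then show "p x1 \<in> Z" using qx(2) Zcl by metis
    show "\<forall>w\<in>ld_orbit p x1. w \<noteq> x1 \<longrightarrow> q w = p w"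
    proof (intro ballI impI)
      fix w assume "w \<in> ld_orbit p x1" "w \<noteq> x1"
      then show "q w = p w" using qx(3) nx by metis
    qed
  qed
  have "Z \<subseteq> ld_orbit p x1 \<union> ld_orbit p x2" unfolding Z_def
  proof (rule ld_orbit_subset_invariant)
    show "x1 \<in> ld_orbit p x1 \<union> ld_orbit p x2" by simp
    have step: "p z \<in> ld_orbit p x" if "z \<in> ld_orbit p x" for x z
      using that ld_orbit_subset_of_mem ld_orbit_apply by fast
    show "\<forall>z\<in>ld_orbit p x1 \<union> ld_orbit p x2. q z \<in> ld_orbit p x1 \<union> ld_orbit p x2"
    proof
      fix z assume z: "z \<in> ld_orbit p x1 \<union> ld_orbit p x2"
      show "q z \<in> ld_orbit p x1 \<union> ld_orbit p x2"
      proof (cases "z = x1 \<or> z = x2")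
        case True then show ?thesis using qx(1,2) by auto
      next
        case False then show ?thesis using qx(3) z step by auto
      qed
    qed
  qed
  then show ?thesis using O1Z O2Z unfolding Z_def q_def by blast
qed

lemma card_orbits_split:
  assumes fin: "finite A" and U: "U \<subseteq> A" "\<forall>x\<in>U. p x \<in> U"
  shows "card (ld_orbit p ` A) = card (ld_orbit p ` U) + card (ld_orbit p ` (A - U))"
proof -
  have "ld_orbit p ` U \<inter> ld_orbit p ` (A - U) = {}"
  proof (rule ccontr)
    assume "ld_orbit p ` U \<inter> ld_orbit p ` (A - U) \<noteq> {}"
    then obtain x y where xy: "x \<in> U" "y \<in> A - U" "ld_orbit p x = ld_orbit p y" by blast
    have "ld_orbit p x \<subseteq> U" using ld_orbit_subset_invariant[OF xy(1) U(2)] .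
    then show False using xy(2,3) ld_orbit_self[of y p] by blast
  qed
  moreover have "ld_orbit p ` A = ld_orbit p ` U \<union> ld_orbit p ` (A - U)" using U(1) by blast
  ultimately show ?thesis using fin U(1) by (simp add: card_Un_disjoint finite_subset)
qed

lemma card_orbits_transpose_join:
  assumes p: "perm_on p A" and x1: "x1 \<in> A" and x2: "x2 \<in> A" and nx: "x2 \<notin> ld_orbit p x1"
  shows "card (ld_orbit (p \<circ> transpose x1 x2) ` A) + 1 = card (ld_orbit p ` A)"
proof -
  define q where "q = p \<circ> transpose x1 x2"
  define U where "U = ld_orbit p x1 \<union> ld_orbit p x2"
  have q: "perm_on q A" unfolding q_def using perm_on_comp_transpose[OF p x1 x2] .
  have fin: "finite A" using p unfolding perm_on_def by blast
  have UA: "U \<subseteq> A" unfolding U_def using ld_orbit_subset[OF p] x1 x2 by blast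
  have Z: "ld_orbit q x1 = U"
    unfolding q_def U_def using ld_orbit_transpose_join[OF assms] .
  have step_in: "f z \<in> ld_orbit f x" if "z \<in> ld_orbit f x" for f x z
    using ld_orbit_subset_of_mem[OF that] ld_orbit_apply[of f z] by blast
  have qU: "ld_orbit q ` U = {U}"
  proof -
    have "ld_orbit q y = U" if "y \<in> U" for y using ld_orbit_eq[OF q x1] that Z by simp
    moreover have "x1 \<in> U" unfolding U_def by simp
    ultimately show ?thesis by blast
  qed
  have pU: "ld_orbit p ` U = {ld_orbit p x1, ld_orbit p x2}"
  proof -
    have "ld_orbit p y \<in> {ld_orbit p x1, ld_orbit p x2}" if "y \<in> U" for y
      using that ld_orbit_eq[OF p x1, of y] ld_orbit_eq[OF p x2, of y] unfolding U_def by blast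
    moreover have "x1 \<in> U" "x2 \<in> U" unfolding U_def by simp_all
    ultimately show ?thesis by blast
  qed
  have "ld_orbit p x1 \<noteq> ld_orbit p x2" using nx ld_orbit_self by metis
  then have "card (ld_orbit p ` U) = 2" unfolding pU by simp
  moreover have "ld_orbit q y = ld_orbit p y" if y: "y \<in> A - U" for y
  proof -
    have "x \<notin> ld_orbit p y" if "x \<in> {x1, x2}" for x
    proof
      assume "x \<in> ld_orbit p y"
      then have "y \<in> ld_orbit p x" using ld_orbit_sym[OF p] y by blast
      then show False using y that unfolding U_def by blast
    qed
    then show ?thesis unfolding q_def by (intro ld_orbit_transpose_other) auto
  qed
  then have "ld_orbit q ` (A - U) = ld_orbit p ` (A - U)" by (rule image_cong[OF refl])
  moreover have "\<forall>x\<in>U. p x \<in> U" using step_in[of _ p] unfolding U_def by blast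
  moreover have "\<forall>x\<in>U. q x \<in> U" using step_in[of _ q x1] unfolding Z by blast
  ultimately show ?thesis using card_orbits_split[OF fin UA] qU unfolding q_def[symmetric] by simp
qed

lemma transpose_separates:
  assumes p: "perm_on p A" and ne: "x1 \<noteq> x2" and yx: "x2 \<in> ld_orbit p x1" and x1: "x1 \<in> A"
  shows "x2 \<notin> ld_orbit (p \<circ> transpose x1 x2) x1"
proof -
  define q where "q = p \<circ> transpose x1 x2"
  have ex: "\<exists>m. (p ^^ m) x2 = x1" using ld_orbit_sym[OF p x1 yx] unfolding ld_orbit_def by blast
  define m where "m = (LEAST m. (p ^^ m) x2 = x1)"
  have pm: "(p ^^ m) x2 = x1" unfolding m_def using LeastI_ex[OF ex] .
  have least: "(p ^^ j) x2 \<noteq> x1" if "j < m" for j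
    using not_less_Least[of j] that unfolding m_def by blast
  have m0: "m \<noteq> 0" using pm ne by (cases m) auto
  define S where "S = (\<lambda>j. (p ^^ j) x2) ` {1..m}"
  have x2S: "x2 \<notin> S"
  proof
    assume "x2 \<in> S"
    then obtain j where j: "1 \<le> j" "j \<le> m" "(p ^^ j) x2 = x2" unfolding S_def by auto
    have "(p ^^ (m - j)) ((p ^^ j) x2) = (p ^^ (m - j + j)) x2" by (simp add: funpow_add)
    then have "(p ^^ (m - j)) x2 = x1" using j pm by simp
    moreover have "m - j < m" using j m0 by simp
    ultimately show False using least by blast
  qed
  have "ld_orbit q x1 \<subseteq> S"
  proof (rule ld_orbit_subset_invariant)
    show "x1 \<in> S" unfolding S_def using pm m0 by force
    show "\<forall>z\<in>S. q z \<in> S"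
    proof
      fix z assume zS: "z \<in> S"
      then obtain j where j: "j \<in> {1..m}" "z = (p ^^ j) x2" unfolding S_def by blast
      show "q z \<in> S"
      proof (cases "z = x1")
        case True
        then show ?thesis using m0 unfolding q_def S_def by (force intro: image_eqI[of _ _ 1])
      next
        case False
        have "z \<noteq> x2" using x2S zS by blast
        then have "q z = (p ^^ Suc j) x2" unfolding q_def using False j(2) by simp
        moreover have "Suc j \<in> {1..m}" using False j pm by (cases "j = m") auto
        ultimately show ?thesis unfolding S_def by (metis image_eqI)
      qed
    qed
  qed
  then show ?thesis using x2S unfolding q_def by blast
qed

lemma card_orbits_transpose_split:
  assumes p: "perm_on p A" and x1: "x1 \<in> A" and x2: "x2 \<in> A" and ne: "x1 \<noteq> x2"
    and yx: "x2 \<in> ld_orbit p x1"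
  shows "card (ld_orbit (p \<circ> transpose x1 x2) ` A) = card (ld_orbit p ` A) + 1"
proof -
  have "p \<circ> transpose x1 x2 \<circ> transpose x1 x2 = p" by (simp add: comp_assoc)
  then show ?thesis
    using card_orbits_transpose_join[OF perm_on_comp_transpose[OF p x1 x2] x1 x2
        transpose_separates[OF p ne yx x1]] by simp
qed

section \<open>First-return maps\<close>

definition return_time :: "('a \<Rightarrow> 'a) \<Rightarrow> 'a set \<Rightarrow> 'a \<Rightarrow> nat" where
  "return_time p R d = (LEAST k. 0 < k \<and> (p ^^ k) d \<in> R)"

definition first_return :: "('a \<Rightarrow> 'a) \<Rightarrow> 'a set \<Rightarrow> 'a \<Rightarrow> 'a" where
  "first_return p R d = (p ^^ return_time p R d) d"

lemma
  assumes p: "perm_on p A" and R: "R \<subseteq> A" and d: "d \<in> R"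
  shows return_time_pos: "0 < return_time p R d"
    and first_return_mem: "first_return p R d \<in> R"
proof -
  obtain N where "N > 0" "(p ^^ N) d = d" using perm_on_periodic[OF p] R d by blast
  then have "\<exists>k. 0 < k \<and> (p ^^ k) d \<in> R" using d by auto
  then show "0 < return_time p R d" "first_return p R d \<in> R"
    unfolding first_return_def return_time_def using LeastI_ex by (metis (mono_tags, lifting))+
qed

lemma funpow_notin_before_return:
  "0 < k \<Longrightarrow> k < return_time p R d \<Longrightarrow> (p ^^ k) d \<notin> R"
  unfolding return_time_def using not_less_Least by blast

lemma first_return_in_orbit: "first_return p R d \<in> ld_orbit p d"
  unfolding first_return_def by (rule ld_orbit_funpow)

lemma funpow_in_return_orbit:
  assumes p: "perm_on p A" and R: "R \<subseteq> A"
  shows "d \<in> R \<Longrightarrow> (p ^^ m) d \<in> R \<Longrightarrow> (p ^^ m) d \<in> ld_orbit (first_return p R) d"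
proof (induction m arbitrary: d rule: less_induct)
  case (less m)
  define k where "k = return_time p R d"
  have k0: "0 < k" unfolding k_def using return_time_pos[OF p R less.prems(1)] .
  show ?case
  proof (cases "m = 0")
    case False
    then have km: "k \<le> m" using funpow_notin_before_return[of m p R d] less.prems(2)
      unfolding k_def by (meson not_le not_gr0)
    have fr: "first_return p R d = (p ^^ k) d" unfolding first_return_def k_def ..
    have eq: "(p ^^ m) d = (p ^^ (m - k)) (first_return p R d)"
      using fr km by (metis funpow_add comp_apply le_add_diff_inverse2)
    have "m - k < m" using k0 km by simp
    from less.IH[OF this first_return_mem[OF p R less.prems(1)]] less.prems(2)
    have "(p ^^ m) d \<in> ld_orbit (first_return p R) (first_return p R d)"
      unfolding eq by blast
    moreover have "ld_orbit (first_return p R) (first_return p R d) \<subseteq> ld_orbit (first_return p R) d"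
      by (rule ld_orbit_subset_of_mem) simp
    ultimately show ?thesis by blast
  qed simp
qed

lemma ld_orbit_first_return:
  assumes p: "perm_on p A" and R: "R \<subseteq> A" and d: "d \<in> R"
  shows "ld_orbit (first_return p R) d = ld_orbit p d \<inter> R"
proof
  have "first_return p R z \<in> ld_orbit p d \<inter> R" if z: "z \<in> ld_orbit p d \<inter> R" for z
  proof -
    have zR: "z \<in> R" and zd: "z \<in> ld_orbit p d" using z by auto
    from zd have "ld_orbit p z \<subseteq> ld_orbit p d" by (rule ld_orbit_subset_of_mem)
    then have "first_return p R z \<in> ld_orbit p d" using first_return_in_orbit[of p R z] by (rule subsetD)
    moreover have "first_return p R z \<in> R" using first_return_mem[OF p R zR] .
    ultimately show ?thesis by (rule IntI)
  qed
  moreover have "d \<in> ld_orbit p d \<inter> R" using d by simp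
  ultimately show "ld_orbit (first_return p R) d \<subseteq> ld_orbit p d \<inter> R"
    by (intro ld_orbit_subset_invariant) auto
  show "ld_orbit p d \<inter> R \<subseteq> ld_orbit (first_return p R) d"
  proof
    fix z assume z: "z \<in> ld_orbit p d \<inter> R"
    then obtain m where "z = (p ^^ m) d" unfolding ld_orbit_def by blast
    then show "z \<in> ld_orbit (first_return p R) d"
      using funpow_in_return_orbit[OF p R d, of m] z by blast
  qed
qed

lemma card_orbits_first_return:
  assumes p: "perm_on p A" and R: "R \<subseteq> A"
  shows "card (ld_orbit (first_return p R) ` R) = card {Y \<in> ld_orbit p ` A. Y \<inter> R \<noteq> {}}"
proof -
  have eq: "ld_orbit (first_return p R) ` R = (\<lambda>Y. Y \<inter> R) ` {Y \<in> ld_orbit p ` A. Y \<inter> R \<noteq> {}}"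
  proof
    show "ld_orbit (first_return p R) ` R \<subseteq> (\<lambda>Y. Y \<inter> R) ` {Y \<in> ld_orbit p ` A. Y \<inter> R \<noteq> {}}"
    proof
      fix X assume "X \<in> ld_orbit (first_return p R) ` R"
      then obtain d where d: "d \<in> R" "X = ld_orbit (first_return p R) d" by blast
      then have "X = ld_orbit p d \<inter> R" using ld_orbit_first_return[OF p R d(1)] by simp
      moreover have "ld_orbit p d \<in> ld_orbit p ` A" using d(1) R by blast
      moreover have "d \<in> ld_orbit p d \<inter> R" using d(1) by simp
      ultimately show "X \<in> (\<lambda>Y. Y \<inter> R) ` {Y \<in> ld_orbit p ` A. Y \<inter> R \<noteq> {}}" by blast
    qed
    show "(\<lambda>Y. Y \<inter> R) ` {Y \<in> ld_orbit p ` A. Y \<inter> R \<noteq> {}} \<subseteq> ld_orbit (first_return p R) ` R"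
    proof
      fix X assume "X \<in> (\<lambda>Y. Y \<inter> R) ` {Y \<in> ld_orbit p ` A. Y \<inter> R \<noteq> {}}"
      then obtain x z where xz: "x \<in> A" "X = ld_orbit p x \<inter> R" "z \<in> ld_orbit p x" "z \<in> R" by blast
      have "ld_orbit p z = ld_orbit p x" using ld_orbit_eq[OF p xz(1,3)] .
      then have "X = ld_orbit (first_return p R) z" using ld_orbit_first_return[OF p R xz(4)] xz by simp
      then show "X \<in> ld_orbit (first_return p R) ` R" using xz by blast
    qed
  qed
  have "inj_on (\<lambda>Y. Y \<inter> R) {Y \<in> ld_orbit p ` A. Y \<inter> R \<noteq> {}}"
  proof (rule inj_onI)
    fix O1 O2 assume O1: "O1 \<in> {Y \<in> ld_orbit p ` A. Y \<inter> R \<noteq> {}}"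
      and O2: "O2 \<in> {Y \<in> ld_orbit p ` A. Y \<inter> R \<noteq> {}}" and eq: "O1 \<inter> R = O2 \<inter> R"
    then obtain x y where "x \<in> A" "y \<in> A" "O1 = ld_orbit p x" "O2 = ld_orbit p y" by blast
    moreover have "O1 \<inter> O2 \<noteq> {}" using O1 eq by blast
    ultimately show "O1 = O2" using ld_orbit_eq_if_meet[OF p] by blast
  qed
  then show ?thesis unfolding eq using card_image by blast
qed

lemma first_return_eq_if_agree:
  assumes agree: "\<And>k. 0 < k \<Longrightarrow> k \<le> return_time q R d \<Longrightarrow> (a ^^ k) r = (q ^^ k) d"
    and pos: "0 < return_time q R d" and mem: "first_return q R d \<in> R"
  shows "first_return a R r = first_return q R d"
proof -
  have "return_time a R r = return_time q R d"
    unfolding return_time_def[of a]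
  proof (rule Least_equality)
    show "0 < return_time q R d \<and> (a ^^ return_time q R d) r \<in> R"
      using agree[OF pos] pos mem unfolding first_return_def by simp
    show "return_time q R d \<le> k" if k: "0 < k \<and> (a ^^ k) r \<in> R" for k
    proof (rule ccontr)
      assume "\<not> return_time q R d \<le> k"
      then show False using k agree[of k] funpow_notin_before_return[of k q R d] by simp
    qed
  qed
  then show ?thesis using agree[OF pos] unfolding first_return_def by simp
qed

section \<open>Components of a symmetric relation\<close>

definition rel_components :: "'b set \<Rightarrow> ('b \<times> 'b) set \<Rightarrow> 'b set set" where
  "rel_components X E = (\<lambda>x. (E\<^sup>*) `` {x}) ` X"

lemma card_rel_components_empty: "card (rel_components X {}) = card X"
proof -
  have "rel_components X {} = (\<lambda>x. {x}) ` X" unfolding rel_components_def by simp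
  moreover have "inj_on (\<lambda>x. {x}) X" by (rule inj_onI) simp
  ultimately show ?thesis by (simp add: card_image)
qed

lemma rtrancl_sym: "sym E \<Longrightarrow> (x, y) \<in> E\<^sup>* \<Longrightarrow> (y, x) \<in> E\<^sup>*"
  by (meson sym_rtrancl symD)

lemma rtrancl_add_connected_pair:
  assumes "sym E" "(u, v) \<in> E\<^sup>*"
  shows "(E \<union> {u, v} \<times> {u, v})\<^sup>* = E\<^sup>*"
proof (rule rtrancl_subset)
  show "E \<subseteq> E \<union> {u, v} \<times> {u, v}" by blast
  have "(v, u) \<in> E\<^sup>*" using rtrancl_sym[OF assms] .
  then show "E \<union> {u, v} \<times> {u, v} \<subseteq> E\<^sup>*" using assms(2) by auto
qed

lemma rtrancl_add_pair_cases:
  assumes s: "sym E" and xy: "(x, y) \<in> (E \<union> {u, v} \<times> {u, v})\<^sup>*"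
  shows "(x, y) \<in> E\<^sup>* \<or> ((x, u) \<in> E\<^sup>* \<and> (v, y) \<in> E\<^sup>*) \<or> ((x, v) \<in> E\<^sup>* \<and> (u, y) \<in> E\<^sup>*)"
  using xy
proof (induction rule: rtrancl_induct)
  case (step y z)
  show ?case
  proof (cases "(y, z) \<in> E")
    case True
    then show ?thesis using step.IH by (meson rtrancl.rtrancl_into_rtrancl)
  next
    case False
    then have yz: "y \<in> {u, v}" "z \<in> {u, v}" using step.hyps(2) by auto
    have refl: "(u, u) \<in> E\<^sup>*" "(v, v) \<in> E\<^sup>*" by auto
    from step.IH show ?thesis
    proof (elim disjE conjE)
      assume "(x, y) \<in> E\<^sup>*"
      then show ?thesis using yz refl by auto
    next
      assume a: "(x, u) \<in> E\<^sup>*" "(v, y) \<in> E\<^sup>*"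
      show ?thesis using yz a refl rtrancl_sym[OF s a(2)] by (auto intro: rtrancl_trans)
    next
      assume a: "(x, v) \<in> E\<^sup>*" "(u, y) \<in> E\<^sup>*"
      show ?thesis using yz a refl rtrancl_sym[OF s a(2)] by (auto intro: rtrancl_trans)
    qed
  qed
qed simp

lemma rtrancl_add_pair_iff:
  assumes s: "sym E"
  shows "(x, y) \<in> (E \<union> {u, v} \<times> {u, v})\<^sup>* \<longleftrightarrow>
    (x, y) \<in> E\<^sup>* \<or> ((x, u) \<in> E\<^sup>* \<and> (v, y) \<in> E\<^sup>*) \<or> ((x, v) \<in> E\<^sup>* \<and> (u, y) \<in> E\<^sup>*)"
proof
  let ?E' = "E \<union> {u, v} \<times> {u, v}"
  have sub: "E\<^sup>* \<subseteq> ?E'\<^sup>*" by (rule rtrancl_mono) blast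
  have uv: "(u, v) \<in> ?E'\<^sup>*" "(v, u) \<in> ?E'\<^sup>*" by auto
  assume "(x, y) \<in> E\<^sup>* \<or> ((x, u) \<in> E\<^sup>* \<and> (v, y) \<in> E\<^sup>*) \<or> ((x, v) \<in> E\<^sup>* \<and> (u, y) \<in> E\<^sup>*)"
  then show "(x, y) \<in> ?E'\<^sup>*"
  proof (elim disjE conjE)
    assume "(x, u) \<in> E\<^sup>*" "(v, y) \<in> E\<^sup>*"
    then show ?thesis using sub uv(1) by (meson rtrancl_trans subsetD)
  next
    assume "(x, v) \<in> E\<^sup>*" "(u, y) \<in> E\<^sup>*"
    then show ?thesis using sub uv(2) by (meson rtrancl_trans subsetD)
  qed (use sub in blast)
qed (rule rtrancl_add_pair_cases[OF s])

lemma rtrancl_add_pair_Image: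
  assumes s: "sym E" and nc: "(u, v) \<notin> E\<^sup>*"
  shows "(E \<union> {u, v} \<times> {u, v})\<^sup>* `` {x} =
    (if (x, u) \<in> E\<^sup>* \<or> (x, v) \<in> E\<^sup>* then E\<^sup>* `` {u} \<union> E\<^sup>* `` {v} else E\<^sup>* `` {x})"
proof -
  have symr: "\<And>a b. (a, b) \<in> E\<^sup>* \<Longrightarrow> (b, a) \<in> E\<^sup>*" using rtrancl_sym[OF s] by blast
  have cls: "E\<^sup>* `` {a} = E\<^sup>* `` {b}" if "(a, b) \<in> E\<^sup>*" for a b
    using that symr by (auto intro: rtrancl_trans)
  have "(E \<union> {u, v} \<times> {u, v})\<^sup>* `` {x} =
      {y. (x, y) \<in> E\<^sup>* \<or> ((x, u) \<in> E\<^sup>* \<and> (v, y) \<in> E\<^sup>*) \<or> ((x, v) \<in> E\<^sup>* \<and> (u, y) \<in> E\<^sup>*)}"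
    using rtrancl_add_pair_iff[OF s] by blast
  also have "\<dots> = (if (x, u) \<in> E\<^sup>* \<or> (x, v) \<in> E\<^sup>* then E\<^sup>* `` {u} \<union> E\<^sup>* `` {v} else E\<^sup>* `` {x})"
  proof (cases "(x, u) \<in> E\<^sup>*")
    case True
    then have "(x, v) \<notin> E\<^sup>*" using nc symr by (meson rtrancl_trans)
    moreover have "E\<^sup>* `` {x} = E\<^sup>* `` {u}" using cls True by blast
    ultimately show ?thesis using True by auto
  next
    case F1: False
    show ?thesis
    proof (cases "(x, v) \<in> E\<^sup>*")
      case True
      moreover have "E\<^sup>* `` {x} = E\<^sup>* `` {v}" using cls True by blast
      ultimately show ?thesis using F1 by auto
    qed (use F1 in auto)
  qed
  finally show ?thesis .
qed

lemma card_rel_components_add_pair: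
  assumes fin: "finite X" and s: "sym E" and u: "u \<in> X" and v: "v \<in> X" and nc: "(u, v) \<notin> E\<^sup>*"
  shows "card (rel_components X (E \<union> {u, v} \<times> {u, v})) + 1 = card (rel_components X E)"
proof -
  let ?E' = "E \<union> {u, v} \<times> {u, v}"
  define C where "C x = E\<^sup>* `` {x}" for x
  define Xo where "Xo = {x \<in> X. (x, u) \<notin> E\<^sup>* \<and> (x, v) \<notin> E\<^sup>*}"
  define M where "M = C ` Xo"
  have symr: "\<And>a b. (a, b) \<in> E\<^sup>* \<Longrightarrow> (b, a) \<in> E\<^sup>*" using rtrancl_sym[OF s] by blast
  have new: "?E'\<^sup>* `` {x} = (if (x, u) \<in> E\<^sup>* \<or> (x, v) \<in> E\<^sup>* then C u \<union> C v else C x)" for x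
    unfolding C_def using rtrancl_add_pair_Image[OF s nc] .
  have uC: "u \<in> C u" "v \<in> C v" unfolding C_def by auto
  have Cuv: "C u \<noteq> C v" using uC nc unfolding C_def by blast
  have notM: "C u \<notin> M" "C v \<notin> M" "C u \<union> C v \<notin> M"
  proof -
    have *: "\<not> (u \<in> C x \<or> v \<in> C x)" if "x \<in> Xo" for x
      using that unfolding Xo_def C_def using symr by blast
    show "C u \<notin> M" "C v \<notin> M" "C u \<union> C v \<notin> M" unfolding M_def using * uC by blast+
  qed
  have Mfin: "finite M" unfolding M_def Xo_def using fin by simp
  have c1: "rel_components X ?E' = insert (C u \<union> C v) M"
  proof
    show "rel_components X ?E' \<subseteq> insert (C u \<union> C v) M"
      unfolding rel_components_def M_def Xo_def using new by auto
    show "insert (C u \<union> C v) M \<subseteq> rel_components X ?E'"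
      unfolding rel_components_def M_def Xo_def using new u by (auto simp: image_iff)
  qed
  have c2: "rel_components X E = insert (C u) (insert (C v) M)"
  proof
    show "rel_components X E \<subseteq> insert (C u) (insert (C v) M)"
    proof
      fix Y assume "Y \<in> rel_components X E"
      then obtain x where x: "x \<in> X" "Y = C x" unfolding rel_components_def C_def by blast
      show "Y \<in> insert (C u) (insert (C v) M)"
      proof (cases "(x, u) \<in> E\<^sup>* \<or> (x, v) \<in> E\<^sup>*")
        case True
        have "C a = C b" if "(a, b) \<in> E\<^sup>*" for a b
          unfolding C_def using that symr by (auto intro: rtrancl_trans)
        then show ?thesis using True x by blast
      next
        case False then show ?thesis using x unfolding M_def Xo_def by blast
      qed
    qed
    show "insert (C u) (insert (C v) M) \<subseteq> rel_components X E"
      unfolding rel_components_def M_def Xo_def C_def using u v by blast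
  qed
  show ?thesis unfolding c1 c2 using notM Mfin Cuv by simp
qed

lemma card_rel_components_eq_1:
  assumes s: "sym E" and ne: "X \<noteq> {}"
  shows "card (rel_components X E) = 1 \<longleftrightarrow> (\<forall>x\<in>X. \<forall>y\<in>X. (x, y) \<in> E\<^sup>*)"
proof
  assume c: "card (rel_components X E) = 1"
  show "\<forall>x\<in>X. \<forall>y\<in>X. (x, y) \<in> E\<^sup>*"
  proof (intro ballI)
    fix x y assume x: "x \<in> X" and y: "y \<in> X"
    obtain Z where "rel_components X E = {Z}" using c card_1_singletonE by blast
    moreover have "E\<^sup>* `` {x} \<in> rel_components X E" "E\<^sup>* `` {y} \<in> rel_components X E"
      unfolding rel_components_def using x y by auto
    ultimately have "E\<^sup>* `` {x} = E\<^sup>* `` {y}" by simp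
    then have "y \<in> E\<^sup>* `` {x}" by simp
    then show "(x, y) \<in> E\<^sup>*" by simp
  qed
next
  assume a: "\<forall>x\<in>X. \<forall>y\<in>X. (x, y) \<in> E\<^sup>*"
  obtain x0 where x0: "x0 \<in> X" using ne by blast
  have "E\<^sup>* `` {x} = E\<^sup>* `` {x0}" if "x \<in> X" for x
  proof -
    have "(x, x0) \<in> E\<^sup>*" "(x0, x) \<in> E\<^sup>*" using a that x0 by auto
    then show ?thesis by (auto intro: rtrancl_trans)
  qed
  then have "rel_components X E = {E\<^sup>* `` {x0}}" unfolding rel_components_def using x0 by blast
  then show "card (rel_components X E) = 1" by simp
qed

lemma card_rel_components_pos: "finite X \<Longrightarrow> X \<noteq> {} \<Longrightarrow> card (rel_components X E) \<ge> 1"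
  unfolding rel_components_def by (simp add: Suc_leI card_gt_0_iff)

lemma funpow_2: "(f ^^ 2) x = f (f x)"
  by (simp add: eval_nat_numeral)

lemma funpow_3: "(f ^^ 3) x = f (f (f x))"
  by (simp add: eval_nat_numeral)

lemma funpow_4: "(f ^^ 4) x = f (f (f (f x)))"
  by (simp add: eval_nat_numeral)

section \<open>Crossings, faces and Tait vertices\<close>

locale shaded_diagram =
  fixes H :: "'d set" and sg al :: "'d \<Rightarrow> 'd" and ov sh :: "'d \<Rightarrow> bool"
  assumes ld: "link_diagram H sg al ov" and cb: "checkerboard H sg al sh"
begin

lemma finite_H: "finite H"
  using ld by (simp add: link_diagram_def)

lemma H_nonempty: "H \<noteq> {}"
  using ld by (simp add: link_diagram_def)

lemma sg_in [simp]: "d \<in> H \<Longrightarrow> sg d \<in> H"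
  using ld unfolding link_diagram_def bij_betw_def by blast

lemma al_in [simp]: "d \<in> H \<Longrightarrow> al d \<in> H"
  using ld unfolding link_diagram_def bij_betw_def by blast

lemma al_al [simp]: "d \<in> H \<Longrightarrow> al (al d) = d"
  using ld unfolding link_diagram_def by blast

lemma inj_on_sg: "inj_on sg H"
  using ld unfolding link_diagram_def bij_betw_def by blast

lemma sg4 [simp]: "d \<in> H \<Longrightarrow> sg (sg (sg (sg d))) = d"
  using ld unfolding link_diagram_def funpow_4 by blast

lemma sg_ne: "d \<in> H \<Longrightarrow> sg d \<noteq> d"
  using ld unfolding link_diagram_def by blast

lemma sg2_ne: "d \<in> H \<Longrightarrow> sg (sg d) \<noteq> d"
  using ld unfolding link_diagram_def funpow_2 by blast

lemma ov_sg [simp]: "d \<in> H \<Longrightarrow> ov (sg d) \<longleftrightarrow> \<not> ov d"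
  using ld unfolding link_diagram_def by blast

lemma diagram_connected: "d \<in> H \<Longrightarrow> e \<in> H \<Longrightarrow> (d, e) \<in> (ld_gen H sg al)\<^sup>*"
  using ld unfolding link_diagram_def by blast

lemma diagram_euler:
  "int (ld_norbits sg H) - int (card H div 2) + int (ld_norbits (al \<circ> sg) H) = 2"
  using ld unfolding link_diagram_def by blast

lemma sh_sg [simp]: "d \<in> H \<Longrightarrow> sh (sg d) \<longleftrightarrow> \<not> sh d"
  using cb unfolding checkerboard_def by blast
lemma sh_alsg: "d \<in> H \<Longrightarrow> sh (al (sg d)) = sh d"
  using cb unfolding checkerboard_def by blast
lemma sh_al [simp]: "d \<in> H \<Longrightarrow> sh (al d) \<longleftrightarrow> \<not> sh d"
proof -
  assume d: "d \<in> H"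
  let ?e = "sg (sg (sg d))"
  have "al d = al (sg ?e)" using d by simp
  then have "sh (al d) = sh ?e" using sh_alsg[of ?e] d by simp
  then show ?thesis using d by simp
qed

lemma sg3_ne: "d \<in> H \<Longrightarrow> sg (sg (sg d)) \<noteq> d"
  by (metis sg4 sg_ne sg_in)

lemma perm_on_sg: "perm_on sg H" unfolding perm_on_def using finite_H inj_on_sg by simp
lemma inj_on_al: "inj_on al H" by (metis al_al inj_onI)
lemma perm_on_face_step: "perm_on (al \<circ> sg) H"
proof -
  have "inj_on al (sg ` H)" using inj_on_al by (rule inj_on_subset) auto
  then have "inj_on (al \<circ> sg) H" using inj_on_sg by (rule comp_inj_on[rotated])
  then show ?thesis unfolding perm_on_def using finite_H by simp
qed

definition crossing :: "'d \<Rightarrow> 'd set" where "crossing d = ld_orbit sg d"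

lemma crossing_eq: "d \<in> H \<Longrightarrow> crossing d = {d, sg d, sg (sg d), sg (sg (sg d))}"
proof -
  assume d: "d \<in> H"
  have "(sg ^^ n) d \<in> {d, sg d, sg (sg d), sg (sg (sg d))}" for n
  proof (induction n)
    case 0 then show ?case by simp
  next
    case (Suc n) then show ?case using d by auto
  qed
  moreover have "{d, sg d, sg (sg d), sg (sg (sg d))} \<subseteq> crossing d"
    unfolding crossing_def ld_orbit_def
    by (auto intro: exI[of _ 0] exI[of _ 1] exI[of _ 2] exI[of _ 3] simp: funpow_2 funpow_3)
  ultimately show ?thesis unfolding crossing_def ld_orbit_def by blast
qed

lemma crossing_sg [simp]: "d \<in> H \<Longrightarrow> crossing (sg d) = crossing d"
  unfolding crossing_def using ld_orbit_apply_eq[OF perm_on_sg] by blast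

lemma crossing_subset: "d \<in> H \<Longrightarrow> crossing d \<subseteq> H" unfolding crossing_def using ld_orbit_subset[OF perm_on_sg] by blast

lemma crossings_eq_image: "crossings H sg = crossing ` H" unfolding crossings_def crossing_def by simp

lemma card_crossing: "d \<in> H \<Longrightarrow> card (crossing d) = 4"
proof -
  assume d: "d \<in> H"
  have n: "d \<noteq> sg d" "d \<noteq> sg (sg d)" "d \<noteq> sg (sg (sg d))"
    "sg d \<noteq> sg (sg d)" "sg d \<noteq> sg (sg (sg d))" "sg (sg d) \<noteq> sg (sg (sg d))"
    using sg_ne[of d] sg2_ne[of d] sg3_ne[of d] sg_ne[of "sg d"] sg2_ne[of "sg d"] sg_ne[of "sg (sg d)"] d
    by auto
  show ?thesis unfolding crossing_eq[OF d] using n by simp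
qed

lemma card_H: "card H = 4 * card (crossings H sg)"
proof -
  have U: "\<Union>(crossing ` H) = H"
  proof
    show "\<Union>(crossing ` H) \<subseteq> H" using crossing_subset by blast
    show "H \<subseteq> \<Union>(crossing ` H)"
    proof
      fix x assume x: "x \<in> H"
      have "x \<in> crossing x" unfolding crossing_def by simp
      then show "x \<in> \<Union>(crossing ` H)" using x by blast
    qed
  qed
  have "4 * card (crossing ` H) = card (\<Union>(crossing ` H))"
  proof (rule card_partition)
    show "finite (crossing ` H)" using finite_H by simp
    show "finite (\<Union>(crossing ` H))" using U finite_H by simp
    show "\<And>c. c \<in> crossing ` H \<Longrightarrow> card c = 4" using card_crossing by blast
    show "\<And>c1 c2. c1 \<in> crossing ` H \<Longrightarrow> c2 \<in> crossing ` H \<Longrightarrow> c1 \<noteq> c2 \<Longrightarrow> c1 \<inter> c2 = {}"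
      unfolding crossing_def using ld_orbit_eq_if_meet[OF perm_on_sg] by blast
  qed
  then show ?thesis using U crossings_eq_image by simp
qed

abbreviation face where "face \<equiv> face_of sg al"
abbreviation TV where "TV \<equiv> tait_vertices H sg al sh"
abbreviation ends where "ends \<equiv> tait_ends sg al sh"

text \<open>The Tait vertex at \<open>d\<close>: the shaded one of the two corners on either side of the dart \<open>d\<close>.\<close>

definition tvertex :: "'d \<Rightarrow> 'd set" where
  "tvertex d = face (if sh d then d else sg (sg (sg d)))"

lemma face_eq_orbit: "face d = ld_orbit (al \<circ> sg) d" unfolding face_of_def ..

lemma face_colour:
  assumes d: "d \<in> H" and x: "x \<in> face d"
  shows "sh x = sh d"
proof -
  have "sh (((al \<circ> sg) ^^ n) d) = sh d \<and> ((al \<circ> sg) ^^ n) d \<in> H" for n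
  proof (induction n)
    case 0 then show ?case using d by simp
  next
    case (Suc n) then show ?case using sh_alsg by simp
  qed
  then show ?thesis using x unfolding face_eq_orbit ld_orbit_def by blast
qed

lemma face_eq: "d \<in> H \<Longrightarrow> e \<in> face d \<Longrightarrow> face e = face d"
  unfolding face_eq_orbit by (rule ld_orbit_eq[OF perm_on_face_step])

lemma face_sg3_al: "x \<in> H \<Longrightarrow> face (sg (sg (sg (al x)))) = face x"
proof -
  assume x: "x \<in> H"
  have "(al \<circ> sg) (sg (sg (sg (al x)))) = x" using x by simp
  then have "x \<in> face (sg (sg (sg (al x))))" unfolding face_eq_orbit by (metis ld_orbit_apply)
  then show ?thesis using face_eq x by (metis sg_in al_in)
qed

lemma face_al: "x \<in> H \<Longrightarrow> face (al x) = face (sg (sg (sg x)))"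
proof -
  assume x: "x \<in> H"
  have "(al \<circ> sg) (sg (sg (sg x))) = al x" using x by simp
  then have "al x \<in> face (sg (sg (sg x)))" unfolding face_eq_orbit by (metis ld_orbit_apply)
  then show ?thesis using face_eq x by (metis sg_in)
qed

lemma tvertex_al [simp]: "x \<in> H \<Longrightarrow> tvertex (al x) = tvertex x"
  unfolding tvertex_def using face_sg3_al face_al by auto

lemma ends_crossing: "y \<in> H \<Longrightarrow> ends (crossing y) = {tvertex y, tvertex (sg (sg y))}"
proof -
  assume y: "y \<in> H"
  have s: "{d \<in> crossing y. sh d} = (if sh y then {y, sg (sg y)} else {sg y, sg (sg (sg y))})"
    unfolding crossing_eq[OF y] using y by auto
  have "sg (sg (sg (sg (sg y)))) = sg y" using y by simp
  then show ?thesis unfolding tait_ends_def s tvertex_def using y by auto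
qed

lemma tvertex_in_ends: "y \<in> H \<Longrightarrow> tvertex y \<in> ends (crossing y)"
  using ends_crossing by blast

lemma ends_subset: "y \<in> H \<Longrightarrow> ends (crossing y) \<subseteq> TV"
  unfolding tait_ends_def tait_vertices_def using crossing_subset by blast

lemma tvertex_in_TV: "y \<in> H \<Longrightarrow> tvertex y \<in> TV"
  using tvertex_in_ends ends_subset by blast

section \<open>States and the circle formula\<close>

text \<open>The state that smooths the crossings in \<open>T\<close> so as to join their two shaded corners, and the
  others so as to separate them. \<open>state_partner T y\<close> is the other end of the state arc at \<open>y\<close>;
  \<open>state_step T\<close> runs along an edge of the diagram and then along a state arc. For either
  colour \<open>b\<close>, its orbits on the darts of colour \<open>b\<close> correspond to the state circles.\<close>

definition state_partner :: "'d set set \<Rightarrow> 'd \<Rightarrow> 'd" where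
  "state_partner T y = (if (crossing y \<in> T) \<noteq> sh y then sg y else sg (sg (sg y)))"

definition state_step :: "'d set set \<Rightarrow> 'd \<Rightarrow> 'd" where
  "state_step T d = state_partner T (al d)"

definition darts :: "bool \<Rightarrow> 'd set" where
  "darts b = {d \<in> H. sh d = b}"

definition ncircles :: "bool \<Rightarrow> 'd set set \<Rightarrow> nat" where
  "ncircles b T = card (ld_orbit (state_step T) ` darts b)"

definition tadj :: "'d set set \<Rightarrow> ('d set \<times> 'd set) set" where
  "tadj T = {(x, y). \<exists>c\<in>T. x \<in> ends c \<and> y \<in> ends c}"

definition ncomps :: "'d set set \<Rightarrow> nat" where
  "ncomps T = card (rel_components TV (tadj T))"

lemma state_partner_props:
  assumes y: "y \<in> H"
  shows "state_partner T y \<in> H" "crossing (state_partner T y) = crossing y" "sh (state_partner T y) \<longleftrightarrow> \<not> sh y" "state_partner T (state_partner T y) = y"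
proof -
  show "state_partner T y \<in> H" "crossing (state_partner T y) = crossing y" "sh (state_partner T y) \<longleftrightarrow> \<not> sh y"
    unfolding state_partner_def using y by auto
  show "state_partner T (state_partner T y) = y"
  proof (cases "(crossing y \<in> T) \<noteq> sh y")
    case True
    then show ?thesis unfolding state_partner_def using y by simp
  next
    case False
    then show ?thesis unfolding state_partner_def using y by simp
  qed
qed

lemma state_step_props:
  assumes d: "d \<in> H"
  shows "state_step T d \<in> H" "sh (state_step T d) = sh d"
  unfolding state_step_def using state_partner_props d by auto

lemma inj_on_state_step: "inj_on (state_step T) H"
proof (rule inj_onI)
  fix x y assume "x \<in> H" "y \<in> H" "state_step T x = state_step T y"
  then have "state_partner T (state_partner T (al x)) = state_partner T (state_partner T (al y))" unfolding state_step_def by simp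
  then have "al x = al y" using state_partner_props(4) \<open>x \<in> H\<close> \<open>y \<in> H\<close> by simp
  then show "x = y" using \<open>x \<in> H\<close> \<open>y \<in> H\<close> by (metis al_al)
qed

lemma perm_on_state_step: "perm_on (state_step T) H"
  unfolding perm_on_def using finite_H state_step_props inj_on_state_step by blast

lemma darts_subset: "darts b \<subseteq> H" unfolding darts_def by blast

lemma perm_on_state_step_darts: "perm_on (state_step T) (darts b)"
  unfolding perm_on_def
proof (intro conjI)
  show "finite (darts b)" using finite_H darts_subset finite_subset by blast
  show "\<forall>x\<in>darts b. state_step T x \<in> darts b" unfolding darts_def using state_step_props by simp
  show "inj_on (state_step T) (darts b)" using inj_on_state_step darts_subset by (rule inj_on_subset)
qed

lemma sym_tadj: "sym (tadj T)" unfolding tadj_def sym_def by blast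

lemma tadj_insert: "tadj (insert e T) = tadj T \<union> ends e \<times> ends e"
  unfolding tadj_def by blast

lemma tvertex_state_partner:
  assumes y: "y \<in> H"
  shows "(tvertex y, tvertex (state_partner T y)) \<in> (tadj T)\<^sup>*"
proof (cases "crossing y \<in> T")
  case True
  have "tvertex y \<in> ends (crossing y)" using tvertex_in_ends y .
  moreover have "tvertex (state_partner T y) \<in> ends (crossing y)" using tvertex_in_ends[OF state_partner_props(1)[OF y]] state_partner_props(2)[OF y] by simp
  ultimately have "(tvertex y, tvertex (state_partner T y)) \<in> tadj T" unfolding tadj_def using True by blast
  then show ?thesis by blast
next
  case False
  have "tvertex (state_partner T y) = tvertex y"
  proof (cases "sh y")
    case True
    then have "state_partner T y = sg y" unfolding state_partner_def using False by simp
    then show ?thesis unfolding tvertex_def using True y by simp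
  next
    case F2: False
    then have "state_partner T y = sg (sg (sg y))" unfolding state_partner_def using False by simp
    then show ?thesis unfolding tvertex_def using F2 y by simp
  qed
  then show ?thesis by simp
qed

lemma tvertex_state_step: "x \<in> H \<Longrightarrow> (tvertex x, tvertex (state_step T x)) \<in> (tadj T)\<^sup>*"
  unfolding state_step_def using tvertex_state_partner[of "al x" T] by simp

lemma tvertex_state_step_funpow: "x \<in> H \<Longrightarrow> (tvertex x, tvertex ((state_step T ^^ n) x)) \<in> (tadj T)\<^sup>*"
proof (induction n)
  case 0 then show ?case by simp
next
  case (Suc n)
  have "(state_step T ^^ n) x \<in> H" using perm_on_funpow_mapsto[OF perm_on_state_step Suc.prems] .
  then have "(tvertex ((state_step T ^^ n) x), tvertex ((state_step T ^^ Suc n) x)) \<in> (tadj T)\<^sup>*"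
    using tvertex_state_step by simp
  then show ?case using Suc by (meson rtrancl_trans)
qed

lemma finite_crossings: "finite (crossings H sg)" unfolding crossings_eq_image using finite_H by simp

lemma finite_TV: "finite TV"
  unfolding tait_vertices_def using finite_H by simp

lemma tadj_insert_crossing:
  "y \<in> H \<Longrightarrow> tadj (insert (crossing y) T)
    = tadj T \<union> {tvertex y, tvertex (sg (sg y))} \<times> {tvertex y, tvertex (sg (sg y))}"
  using tadj_insert ends_crossing by simp

lemma ncomps_insert_connected:
  assumes "y \<in> H" "(tvertex y, tvertex (sg (sg y))) \<in> (tadj T)\<^sup>*"
  shows "ncomps (insert (crossing y) T) = ncomps T"
  unfolding ncomps_def tadj_insert_crossing[OF assms(1)] rel_components_def
    rtrancl_add_connected_pair[OF sym_tadj assms(2)] ..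

lemma ncomps_insert_disconnected:
  assumes "y \<in> H" "(tvertex y, tvertex (sg (sg y))) \<notin> (tadj T)\<^sup>*"
  shows "ncomps (insert (crossing y) T) + 1 = ncomps T"
  unfolding ncomps_def tadj_insert_crossing[OF assms(1)]
  using card_rel_components_add_pair[OF finite_TV sym_tadj _ _ assms(2)] tvertex_in_TV assms(1)
  by simp

lemma tvertex_state_orbit:
  "x \<in> H \<Longrightarrow> z \<in> ld_orbit (state_step T) x \<Longrightarrow> (tvertex x, tvertex z) \<in> (tadj T)\<^sup>*"
  unfolding ld_orbit_def using tvertex_state_step_funpow by blast

text \<open>Adding the crossing of \<open>u\<close> to \<open>T\<close> exchanges the two state arcs at that crossing, which
  on the darts of the colour opposite to \<open>u\<close> is composition with a transposition.\<close>

lemma state_step_insert: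
  assumes u: "u \<in> H" and uT: "crossing u \<notin> T" and z: "z \<in> darts (\<not> sh u)"
  shows "state_step (insert (crossing u) T) z = (state_step T \<circ> transpose (al u) (al (sg (sg u)))) z"
proof -
  have zH: "z \<in> H" using z darts_subset by blast
  have crs: "crossing (sg (sg u)) = crossing u" using u by simp
  consider "z = al u" | "z = al (sg (sg u))" | "z \<noteq> al u" "z \<noteq> al (sg (sg u))" by blast
  then show ?thesis
  proof cases
    case 1
    then show ?thesis unfolding state_step_def state_partner_def using u uT crs by auto
  next
    case 2
    moreover have "al u \<noteq> al (sg (sg u))" using u sg2_ne[OF u] by (metis al_al sg_in)
    ultimately show ?thesis unfolding state_step_def state_partner_def using u uT crs by auto
  next
    case 3
    have shz: "sh (al z) = sh u" using z zH u unfolding darts_def by simp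
    have a1: "al z \<noteq> u" and a2: "al z \<noteq> sg (sg u)" using 3 zH by (metis al_al)+
    have "crossing (al z) \<noteq> crossing u"
    proof
      assume "crossing (al z) = crossing u"
      then have "al z \<in> crossing u" unfolding crossing_def by (metis ld_orbit_self)
      then have "al z \<in> {u, sg u, sg (sg u), sg (sg (sg u))}" using crossing_eq[OF u] by simp
      then show False using a1 a2 shz u by auto
    qed
    then show ?thesis unfolding state_step_def state_partner_def using 3 by simp
  qed
qed

lemma ncircles_insert:
  assumes u: "u \<in> H" and uT: "crossing u \<notin> T"
  shows "ncircles (\<not> sh u) (insert (crossing u) T)
    = card (ld_orbit (state_step T \<circ> transpose (al u) (al (sg (sg u)))) ` darts (\<not> sh u))"
proof -
  have "ld_orbit (state_step (insert (crossing u) T)) z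
      = ld_orbit (state_step T \<circ> transpose (al u) (al (sg (sg u)))) z" if z: "z \<in> darts (\<not> sh u)" for z
  proof (rule ld_orbit_cong_invariant[OF z])
    show "\<forall>z\<in>darts (\<not> sh u). state_step (insert (crossing u) T) z \<in> darts (\<not> sh u)"
      using perm_on_state_step_darts unfolding perm_on_def by blast
    show "\<forall>z\<in>darts (\<not> sh u). state_step (insert (crossing u) T) z
        = (state_step T \<circ> transpose (al u) (al (sg (sg u)))) z"
      using state_step_insert[OF u uT] by blast
  qed
  then show ?thesis unfolding ncircles_def by (metis (no_types, lifting) image_cong)
qed

definition circle_defect :: "bool \<Rightarrow> 'd set set \<Rightarrow> int" where
  "circle_defect b T = 2 * int (ncomps T) + int (card T) - int (card TV) - int (ncircles b T)"

text \<open>Either the new edge joins two components, and then its two state arcs lie on different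
  circles, which merge; or the number of components stays and the number of circles changes by one.\<close>

lemma circle_defect_insert:
  assumes TS: "T \<subseteq> crossings H sg" and e: "e \<in> crossings H sg" and eT: "e \<notin> T"
  shows "circle_defect b T \<le> circle_defect b (insert e T)"
proof -
  obtain y where y: "y \<in> H" "e = crossing y" using e crossings_eq_image by blast
  define u where "u = (if sh y = (\<not> b) then y else sg y)"
  have u: "u \<in> H" "crossing u = e" "b = (\<not> sh u)" unfolding u_def using y by auto
  define x1 where "x1 = al u"
  define x2 where "x2 = al (sg (sg u))"
  have q: "perm_on (state_step T) (darts b)" by (rule perm_on_state_step_darts)
  have "x1 \<noteq> x2" unfolding x1_def x2_def using u(1) sg2_ne[OF u(1)] by (metis al_al sg_in)
  then have x: "x1 \<in> darts b" "x2 \<in> darts b" "x1 \<noteq> x2"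
    unfolding darts_def x1_def x2_def using u by auto
  have circ: "ncircles b (insert e T) = card (ld_orbit (state_step T \<circ> transpose x1 x2) ` darts b)"
    using ncircles_insert[OF u(1)] eT unfolding u(2,3) x1_def x2_def by blast
  have circ0: "ncircles b T = card (ld_orbit (state_step T) ` darts b)" unfolding ncircles_def ..
  have cT: "card (insert e T) = card T + 1"
    using eT finite_subset[OF TS finite_crossings] by simp
  have tv: "tvertex x1 = tvertex u" "tvertex x2 = tvertex (sg (sg u))"
    unfolding x1_def x2_def using u(1) by simp_all
  show ?thesis
  proof (cases "(tvertex u, tvertex (sg (sg u))) \<in> (tadj T)\<^sup>*")
    case True
    have "int (ncircles b (insert e T)) \<le> int (ncircles b T) + 1"
      using card_orbits_transpose_split[OF q x] card_orbits_transpose_join[OF q x(1,2)] circ circ0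
      by (cases "x2 \<in> ld_orbit (state_step T) x1") simp_all
    then show ?thesis using ncomps_insert_connected[OF u(1) True] u(2) cT
      unfolding circle_defect_def by simp
  next
    case False
    have "x1 \<in> H" using x(1) darts_subset by blast
    then have "x2 \<notin> ld_orbit (state_step T) x1"
      using tvertex_state_orbit[of x1 x2 T] False tv by auto
    then have "ncircles b (insert e T) + 1 = ncircles b T"
      using card_orbits_transpose_join[OF q x(1,2)] circ circ0 by simp
    then show ?thesis using ncomps_insert_disconnected[OF u(1) False] u(2) cT
      unfolding circle_defect_def by simp
  qed
qed

lemma circle_defect_mono:
  assumes "finite D" "T \<union> D \<subseteq> crossings H sg"
  shows "circle_defect b T \<le> circle_defect b (T \<union> D)"
  using assms
proof (induction D rule: finite_induct)
  case empty then show ?case by simp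
next
  case (insert e D)
  have IH: "circle_defect b T \<le> circle_defect b (T \<union> D)" using insert by simp
  show ?case
  proof (cases "e \<in> T")
    case True
    then have "T \<union> insert e D = T \<union> D" by blast
    then show ?thesis using IH by simp
  next
    case False
    have "circle_defect b (T \<union> D) \<le> circle_defect b (insert e (T \<union> D))"
      using circle_defect_insert[of "T \<union> D" e b] insert False by simp
    then show ?thesis using IH by simp
  qed
qed

lemma state_step_al_state_step: "z \<in> H \<Longrightarrow> state_step T (al (state_step T z)) = al z"
  unfolding state_step_def using state_partner_props by simp

lemma al_image_state_orbit_subset:
  assumes x: "x \<in> H"
  shows "al ` ld_orbit (state_step T) x \<subseteq> ld_orbit (state_step T) (al x)"
proof -
  have "al ((state_step T ^^ n) x) \<in> ld_orbit (state_step T) (al x)" for n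
  proof (induction n)
    case 0 then show ?case by simp
  next
    case (Suc n)
    define w where "w = (state_step T ^^ n) x"
    have wH: "w \<in> H" unfolding w_def using perm_on_funpow_mapsto[OF perm_on_state_step x] .
    have a: "state_step T (al (state_step T w)) = al w" using state_step_al_state_step[OF wH] .
    have h1: "al (state_step T w) \<in> H" using wH state_step_props by simp
    have "al w \<in> ld_orbit (state_step T) (al (state_step T w))" using a by (metis ld_orbit_apply)
    then have "ld_orbit (state_step T) (al w) = ld_orbit (state_step T) (al (state_step T w))"
      using ld_orbit_eq[OF perm_on_state_step h1] by blast
    moreover have "ld_orbit (state_step T) (al w) = ld_orbit (state_step T) (al x)"
      using ld_orbit_eq[OF perm_on_state_step al_in[OF x]] Suc unfolding w_def by blast
    moreover have "al (state_step T w) \<in> ld_orbit (state_step T) (al (state_step T w))" by simp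
    ultimately show ?case unfolding w_def by simp
  qed
  then show ?thesis unfolding ld_orbit_def by blast
qed

lemma al_image_al_image: "Y \<subseteq> H \<Longrightarrow> al ` al ` Y = Y"
  by (force simp: image_iff)

lemma state_orbit_al:
  assumes x: "x \<in> H"
  shows "ld_orbit (state_step T) (al x) = al ` ld_orbit (state_step T) x"
proof
  show "al ` ld_orbit (state_step T) x \<subseteq> ld_orbit (state_step T) (al x)" using al_image_state_orbit_subset[OF x] .
  have "al ` ld_orbit (state_step T) (al x) \<subseteq> ld_orbit (state_step T) x"
    using al_image_state_orbit_subset[OF al_in[OF x]] x by simp
  then have "al ` al ` ld_orbit (state_step T) (al x) \<subseteq> al ` ld_orbit (state_step T) x" by blast
  moreover have "al ` al ` ld_orbit (state_step T) (al x) = ld_orbit (state_step T) (al x)"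
    using ld_orbit_subset[OF perm_on_state_step al_in[OF x]] by (rule al_image_al_image)
  ultimately show "ld_orbit (state_step T) (al x) \<subseteq> al ` ld_orbit (state_step T) x" by simp
qed

lemma ncircles_colour: "ncircles b T = ncircles (\<not> b) T"
proof -
  have W: "darts (\<not> b) = al ` darts b"
  proof
    show "al ` darts b \<subseteq> darts (\<not> b)" unfolding darts_def by auto
    show "darts (\<not> b) \<subseteq> al ` darts b"
    proof
      fix x assume "x \<in> darts (\<not> b)"
      then have x: "x \<in> H" "sh x = (\<not> b)" unfolding darts_def by auto
      then have "al x \<in> darts b" "al (al x) = x" unfolding darts_def by auto
      then show "x \<in> al ` darts b" by (metis imageI)
    qed
  qed
  have img: "ld_orbit (state_step T) ` darts (\<not> b) = image al ` (ld_orbit (state_step T) ` darts b)"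
  proof
    show "ld_orbit (state_step T) ` darts (\<not> b) \<subseteq> image al ` (ld_orbit (state_step T) ` darts b)"
    proof
      fix Y assume "Y \<in> ld_orbit (state_step T) ` darts (\<not> b)"
      then obtain x where x: "x \<in> darts b" "Y = ld_orbit (state_step T) (al x)" unfolding W by blast
      then have "Y = al ` ld_orbit (state_step T) x" using state_orbit_al darts_subset by blast
      then show "Y \<in> image al ` (ld_orbit (state_step T) ` darts b)" using x(1) by blast
    qed
    show "image al ` (ld_orbit (state_step T) ` darts b) \<subseteq> ld_orbit (state_step T) ` darts (\<not> b)"
    proof
      fix Y assume "Y \<in> image al ` (ld_orbit (state_step T) ` darts b)"
      then obtain x where x: "x \<in> darts b" "Y = al ` ld_orbit (state_step T) x" by blast
      then have "Y = ld_orbit (state_step T) (al x)" using state_orbit_al darts_subset by blast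
      moreover have "al x \<in> darts (\<not> b)" unfolding W using x(1) by blast
      ultimately show "Y \<in> ld_orbit (state_step T) ` darts (\<not> b)" by blast
    qed
  qed
  have "inj_on (image al) (ld_orbit (state_step T) ` darts b)"
  proof (rule inj_on_subset[OF inj_on_image_Pow[OF inj_on_al]])
    show "ld_orbit (state_step T) ` darts b \<subseteq> Pow H"
      using ld_orbit_subset[OF perm_on_state_step] darts_subset by blast
  qed
  then show ?thesis unfolding ncircles_def img by (simp add: card_image)
qed

lemma perm_on_face_step_darts: "perm_on (al \<circ> sg) (darts b)"
  unfolding perm_on_def
proof (intro conjI)
  show "finite (darts b)" using finite_H darts_subset finite_subset by blast
  show "\<forall>x\<in>darts b. (al \<circ> sg) x \<in> darts b" unfolding darts_def using sh_alsg by simp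
  show "inj_on (al \<circ> sg) (darts b)" using perm_on_face_step darts_subset unfolding perm_on_def by (meson inj_on_subset)
qed

lemma ncircles_eq_faces:
  assumes "\<forall>x\<in>darts b. state_step T x = sg (sg (sg (al x)))"
  shows "ncircles b T = card (face ` darts b)"
proof -
  have "ld_orbit (state_step T) x = face x" if x: "x \<in> darts b" for x
  proof -
    have "\<forall>x\<in>darts b. (al \<circ> sg) (state_step T x) = x"
    proof
      fix x assume x: "x \<in> darts b"
      then have xH: "x \<in> H" using darts_subset by blast
      show "(al \<circ> sg) (state_step T x) = x" using assms x xH by simp
    qed
    then show ?thesis unfolding face_eq_orbit using ld_orbit_inverse[OF perm_on_state_step_darts perm_on_face_step_darts _ x] by blast
  qed
  then show ?thesis unfolding ncircles_def by (metis (no_types, lifting) image_cong)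
qed

lemma ncircles_empty: "ncircles True {} = card TV"
proof -
  have "\<forall>x\<in>darts True. state_step {} x = sg (sg (sg (al x)))"
    unfolding darts_def state_step_def state_partner_def by auto
  then have "ncircles True {} = card (face ` darts True)" by (rule ncircles_eq_faces)
  moreover have "darts True = {d \<in> H. sh d}" unfolding darts_def by simp
  ultimately show ?thesis unfolding tait_vertices_def by simp
qed

lemma ncircles_all: "ncircles False (crossings H sg) = card (face ` darts False)"
proof (rule ncircles_eq_faces)
  show "\<forall>x\<in>darts False. state_step (crossings H sg) x = sg (sg (sg (al x)))"
    unfolding darts_def state_step_def state_partner_def crossings_eq_image by auto
qed

lemma card_faces_by_colour: "card (face ` H) = card TV + card (face ` darts False)"
proof -
  have U: "face ` H = face ` darts True \<union> face ` darts False" unfolding darts_def by auto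
  have D: "face ` darts True \<inter> face ` darts False = {}"
  proof (rule ccontr)
    assume "face ` darts True \<inter> face ` darts False \<noteq> {}"
    then obtain a c where ac: "a \<in> darts True" "c \<in> darts False" "face a = face c" by blast
    have "a \<in> face a" unfolding face_eq_orbit by simp
    then have "a \<in> face c" using ac by simp
    then have "sh a = sh c" using face_colour ac darts_subset by blast
    then show False using ac unfolding darts_def by simp
  qed
  have "darts True = {d \<in> H. sh d}" unfolding darts_def by simp
  then have "TV = face ` darts True" unfolding tait_vertices_def by simp
  then show ?thesis unfolding U using D finite_H darts_subset
    by (metis card_Un_disjoint finite_imageI finite_subset)
qed

lemma card_faces_euler: "card (face ` H) = card (crossings H sg) + 2"
proof -
  have "ld_norbits sg H = card (crossings H sg)" unfolding ld_norbits_def crossings_def ..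
  moreover have "card H div 2 = 2 * card (crossings H sg)" using card_H by simp
  moreover have "ld_norbits (al \<circ> sg) H = card (face ` H)"
    unfolding ld_norbits_def face_of_def by simp
  ultimately show ?thesis using diagram_euler by linarith
qed

lemma tvertex_connected:
  assumes x: "x \<in> H" and y: "y \<in> H"
  shows "(tvertex x, tvertex y) \<in> (tadj (crossings H sg))\<^sup>*"
proof -
  have "(x, y) \<in> (ld_gen H sg al)\<^sup>*" using diagram_connected x y .
  then show ?thesis
  proof (induction rule: rtrancl_induct)
    case base then show ?case by simp
  next
    case (step y z)
    from step.hyps(2) obtain d where d: "d \<in> H" "y = d" "z = sg d \<or> z = al d"
      unfolding ld_gen_def by blast
    have "(tvertex y, tvertex z) \<in> (tadj (crossings H sg))\<^sup>*"
    proof (cases "z = sg d")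
      case True
      have "tvertex d \<in> ends (crossing d)" "tvertex (sg d) \<in> ends (crossing d)"
        using tvertex_in_ends[OF d(1)] tvertex_in_ends[OF sg_in[OF d(1)]] d(1) by simp_all
      moreover have "crossing d \<in> crossings H sg" using d(1) crossings_eq_image by blast
      ultimately have "(tvertex d, tvertex (sg d)) \<in> tadj (crossings H sg)" unfolding tadj_def by blast
      then show ?thesis using True d by blast
    next
      case False
      then have "z = al d" using d by blast
      then show ?thesis using d by simp
    qed
    then show ?case using step.IH by (meson rtrancl_trans)
  qed
qed

lemma TV_nonempty: "TV \<noteq> {}"
proof -
  obtain d where d: "d \<in> H" using H_nonempty by blast
  have "tvertex d \<in> TV" using tvertex_in_TV[OF d] .
  then show ?thesis by blast
qed

lemma TV_tvertex: "v \<in> TV \<Longrightarrow> \<exists>x\<in>H. v = tvertex x"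
  unfolding tait_vertices_def tvertex_def by auto

lemma ncomps_all: "ncomps (crossings H sg) = 1"
  unfolding ncomps_def
proof (subst card_rel_components_eq_1[OF sym_tadj TV_nonempty], intro ballI)
  fix u v assume "u \<in> TV" "v \<in> TV"
  then obtain x y where "x \<in> H" "y \<in> H" "u = tvertex x" "v = tvertex y" using TV_tvertex by metis
  then show "(u, v) \<in> (tadj (crossings H sg))\<^sup>*" using tvertex_connected by simp
qed

lemma ncomps_empty: "ncomps {} = card TV"
proof -
  have "tadj {} = {}" unfolding tadj_def by simp
  then show ?thesis unfolding ncomps_def using card_rel_components_empty by simp
qed

lemma circle_defect_empty: "circle_defect b {} = 0"
proof -
  have "ncircles b {} = card TV" using ncircles_empty ncircles_colour[of False "{}"] by (cases b) auto
  then show ?thesis unfolding circle_defect_def using ncomps_empty by simp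
qed

lemma circle_defect_all: "circle_defect b (crossings H sg) = 0"
proof -
  have "ncircles b (crossings H sg) = card (face ` darts False)" using ncircles_all ncircles_colour[of True "crossings H sg"] by (cases b) auto
  then show ?thesis unfolding circle_defect_def using ncomps_all card_faces_euler card_faces_by_colour by simp
qed

lemma circle_defect_eq_0:
  assumes T: "T \<subseteq> crossings H sg"
  shows "circle_defect b T = 0"
proof -
  have fT: "finite T" using T finite_crossings finite_subset by blast
  have "circle_defect b {} \<le> circle_defect b ({} \<union> T)" using circle_defect_mono[OF fT, where T="{}" and b=b] T by simp
  moreover have "circle_defect b T \<le> circle_defect b (T \<union> (crossings H sg - T))"
    using circle_defect_mono[of "crossings H sg - T" T b] finite_crossings T by blast
  moreover have "T \<union> (crossings H sg - T) = crossings H sg" using T by blast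
  ultimately show ?thesis using circle_defect_empty circle_defect_all by simp
qed

lemma ncircles_formula:
  assumes "T \<subseteq> crossings H sg"
  shows "int (ncircles b T) = 2 * int (ncomps T) + int (card T) - int (card TV)"
  using circle_defect_eq_0[OF assms, of b] unfolding circle_defect_def by simp

section \<open>The all-A state and the faces of ribbon subgraphs\<close>

definition Epos :: "'d set set" where
  "Epos = {c \<in> crossings H sg. tait_positive ov sh c}"

text \<open>The all-A state is the state \<open>Epos\<close>; switching the crossings of \<open>S\<close> in it gives \<open>flip S\<close>.\<close>

definition flip :: "'d set set \<Rightarrow> 'd set set" where
  "flip S = (Epos - S) \<union> (S - Epos)"

lemma tait_positive_crossing: "y \<in> H \<Longrightarrow> tait_positive ov sh (crossing y) \<longleftrightarrow> (ov y = sh y)"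
  unfolding tait_positive_def crossing_eq by auto

lemma crossing_in_crossings: "y \<in> H \<Longrightarrow> crossing y \<in> crossings H sg" using crossings_eq_image by blast

lemma state_partner_flip:
  assumes y: "y \<in> H"
  shows "state_partner (flip S) y = (if crossing y \<in> S then (if ov y then sg y else sg (sg (sg y)))
                         else partnerA sg ov y)"
proof -
  have P: "crossing y \<in> Epos \<longleftrightarrow> (ov y = sh y)" unfolding Epos_def using tait_positive_crossing[OF y] crossing_in_crossings[OF y] by simp
  show ?thesis unfolding state_partner_def flip_def partnerA_def funpow_3 using P by auto
qed

lemma flip_empty: "flip {} = Epos" unfolding flip_def by simp

lemma stepA_eq_state_step: "d \<in> H \<Longrightarrow> stepA sg al ov d = state_step Epos d"
  unfolding stepA_def state_step_def using state_partner_flip[of "al d" "{}"] flip_empty by simp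

lemma partnerA_eq_state_partner: "y \<in> H \<Longrightarrow> partnerA sg ov y = state_partner Epos y"
  using state_partner_flip[of y "{}"] flip_empty by simp

lemma rdarts_eq_darts: "rdarts H sh ou = darts (\<not> sh ou)"
  unfolding rdarts_def darts_def by auto

lemma redge_eq:
  assumes d: "d \<in> darts (\<not> sh ou)"
  shows "redge H sg al ov sh ou d = al (sg (sg (al d)))"
proof -
  have dH: "d \<in> H" using d darts_subset by blast
  have "al (sg (sg (al d))) \<in> rdarts H sh ou" unfolding rdarts_eq_darts darts_def using d dH unfolding darts_def by simp
  then show ?thesis unfolding redge_def funpow_2 by simp
qed

lemma rsub_subset: "rsub H sg al sh ou S \<subseteq> darts (\<not> sh ou)"
  unfolding rsub_def rdarts_eq_darts by blast

lemma rsub_iff: "d \<in> darts (\<not> sh ou) \<Longrightarrow> d \<in> rsub H sg al sh ou S \<longleftrightarrow> crossing (al d) \<in> S"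
  unfolding rsub_def rdarts_eq_darts crossing_def by blast

lemma state_step_flip_rsub:
  assumes d: "d \<in> rsub H sg al sh ou S"
  shows "state_step (flip S) d = stepA sg al ov (redge H sg al ov sh ou d)"
proof -
  have dW: "d \<in> darts (\<not> sh ou)" using d rsub_subset by blast
  then have dH: "d \<in> H" using darts_subset by blast
  have S: "crossing (al d) \<in> S" using rsub_iff[OF dW] d by blast
  have "stepA sg al ov (redge H sg al ov sh ou d) = partnerA sg ov (sg (sg (al d)))"
    unfolding redge_eq[OF dW] stepA_def using dH by simp
  also have "\<dots> = (if ov (al d) then sg (al d) else sg (sg (sg (al d))))"
    unfolding partnerA_def funpow_3 using dH by simp
  also have "\<dots> = state_step (flip S) d" unfolding state_step_def using state_partner_flip[of "al d" S] S dH by simp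
  finally show ?thesis by simp
qed

lemma state_step_flip_not_rsub:
  assumes d: "d \<in> darts (\<not> sh ou)" "d \<notin> rsub H sg al sh ou S"
  shows "state_step (flip S) d = stepA sg al ov d"
proof -
  have dH: "d \<in> H" using d darts_subset by blast
  have S: "crossing (al d) \<notin> S" using rsub_iff[OF d(1)] d(2) by blast
  show ?thesis unfolding state_step_def stepA_def using state_partner_flip[of "al d" S] S dH by simp
qed

lemma rrot_eq_first_return:
  "rrot H sg al ov sh ou S = first_return (stepA sg al ov) (rsub H sg al sh ou S)"
  unfolding rrot_def first_return_def return_time_def ..

lemma stepA_funpow_redge:
  assumes d: "d \<in> rsub H sg al sh ou S"
    and k: "0 < k" "k \<le> return_time (state_step (flip S)) (rsub H sg al sh ou S) d"
  shows "(stepA sg al ov ^^ k) (redge H sg al ov sh ou d) = (state_step (flip S) ^^ k) d"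
  using k
proof (induction k)
  case (Suc k)
  define q where "q = state_step (flip S)"
  show ?case
  proof (cases "k = 0")
    case True
    then show ?thesis using state_step_flip_rsub[OF d] by simp
  next
    case False
    have dW: "d \<in> darts (\<not> sh ou)" using d rsub_subset by blast
    have "(q ^^ k) d \<in> darts (\<not> sh ou)"
      using perm_on_funpow_mapsto[OF perm_on_state_step_darts dW] unfolding q_def .
    moreover have "(q ^^ k) d \<notin> rsub H sg al sh ou S"
      by (rule funpow_notin_before_return) (use False Suc.prems(2) in \<open>simp_all add: q_def\<close>)
    ultimately have "q ((q ^^ k) d) = stepA sg al ov ((q ^^ k) d)"
      using state_step_flip_not_rsub unfolding q_def by blast
    then show ?thesis using Suc False unfolding q_def by simp
  qed
qed simp

lemma rrot_redge:
  assumes d: "d \<in> rsub H sg al sh ou S"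
  shows "rrot H sg al ov sh ou S (redge H sg al ov sh ou d)
    = first_return (state_step (flip S)) (rsub H sg al sh ou S) d"
proof -
  have RW: "rsub H sg al sh ou S \<subseteq> darts (\<not> sh ou)" by (rule rsub_subset)
  show ?thesis unfolding rrot_eq_first_return
    by (rule first_return_eq_if_agree[OF stepA_funpow_redge[OF d]
          return_time_pos[OF perm_on_state_step_darts RW d] first_return_mem[OF perm_on_state_step_darts RW d]])
qed

definition allA_rel :: "('d \<times> 'd) set" where
  "allA_rel = {(d, al d) |d. d \<in> H} \<union> {(d, partnerA sg ov d) |d. d \<in> H}"

definition al_hull :: "'d set \<Rightarrow> 'd set" where
  "al_hull X = X \<union> al ` X"

lemma allA_circles_eq_quotient: "allA_circles H sg al ov = H // allA_rel\<^sup>*"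
  unfolding allA_circles_def allA_rel_def ..

lemma allA_rel_state_step: "z \<in> H \<Longrightarrow> (z, state_step Epos z) \<in> allA_rel\<^sup>*"
proof -
  assume z: "z \<in> H"
  have "(z, al z) \<in> allA_rel" "(al z, partnerA sg ov (al z)) \<in> allA_rel"
    unfolding allA_rel_def using z by auto
  moreover have "partnerA sg ov (al z) = state_step Epos z"
    unfolding state_step_def using partnerA_eq_state_partner z by simp
  ultimately show ?thesis by (metis rtrancl.rtrancl_into_rtrancl r_into_rtrancl)
qed

lemma allA_rel_closed:
  assumes w: "w \<in> H" and x: "x \<in> al_hull (ld_orbit (state_step Epos) w)" and xz: "(x, z) \<in> allA_rel"
  shows "z \<in> al_hull (ld_orbit (state_step Epos) w)"
proof -
  define X where "X = ld_orbit (state_step Epos) w"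
  have XH: "X \<subseteq> H" unfolding X_def using ld_orbit_subset[OF perm_on_state_step w] .
  from xz obtain d where d: "d \<in> H" "x = d" "z = al d \<or> z = partnerA sg ov d"
    unfolding allA_rel_def by blast
  consider "z = al d" | "z = state_partner Epos x" using d partnerA_eq_state_partner[of d] by blast
  then show ?thesis
  proof cases
    case 1
    have "x \<in> X \<or> (\<exists>y\<in>X. x = al y)" using x unfolding X_def al_hull_def by blast
    then show ?thesis
    proof
      assume "x \<in> X"
      then show ?thesis using 1 d unfolding X_def al_hull_def by blast
    next
      assume "\<exists>y\<in>X. x = al y"
      then obtain y where y: "y \<in> X" "x = al y" by blast
      then have "z = y" using 1 d XH by auto
      then show ?thesis using y unfolding X_def al_hull_def by blast
    qed
  next
    case 2
    show ?thesis
    proof (cases "x \<in> X")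
      case True
      obtain y where y: "y \<in> X" "state_step Epos y = x"
        using ld_orbit_preimage[OF perm_on_state_step w] True unfolding X_def by blast
      have yH: "y \<in> H" using y XH by blast
      have "state_partner Epos x = al y"
        using y(2) state_partner_props(4)[OF al_in[OF yH], where T=Epos] unfolding state_step_def by metis
      then show ?thesis using 2 y unfolding X_def al_hull_def by blast
    next
      case False
      then obtain y where y: "y \<in> X" "x = al y" using x unfolding X_def al_hull_def by blast
      then have "z = state_step Epos y" using 2 unfolding state_step_def by simp
      moreover have "ld_orbit (state_step Epos) y \<subseteq> X"
        using ld_orbit_subset_of_mem[of y "state_step Epos" w] y(1) unfolding X_def by blast
      moreover have "state_step Epos y \<in> ld_orbit (state_step Epos) y" by (rule ld_orbit_apply)
      ultimately show ?thesis unfolding X_def al_hull_def by blast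
    qed
  qed
qed

lemma allA_class_eq:
  assumes w: "w \<in> H"
  shows "allA_rel\<^sup>* `` {w} = al_hull (ld_orbit (state_step Epos) w)"
proof
  define X where "X = ld_orbit (state_step Epos) w"
  show "allA_rel\<^sup>* `` {w} \<subseteq> al_hull X"
  proof
    fix z assume "z \<in> allA_rel\<^sup>* `` {w}"
    then have "(w, z) \<in> allA_rel\<^sup>*" by simp
    then show "z \<in> al_hull X"
    proof (induction rule: rtrancl_induct)
      case base then show ?case unfolding X_def al_hull_def by simp
    next
      case (step y z) then show ?case using allA_rel_closed[OF w] unfolding X_def by blast
    qed
  qed
  have it: "(w, (state_step Epos ^^ n) w) \<in> allA_rel\<^sup>*" for n
  proof (induction n)
    case (Suc n)
    have "(state_step Epos ^^ n) w \<in> H" using perm_on_funpow_mapsto[OF perm_on_state_step w] .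
    then show ?case using Suc allA_rel_state_step by (metis funpow.simps(2) comp_apply rtrancl_trans)
  qed simp
  then have XR: "X \<subseteq> allA_rel\<^sup>* `` {w}" unfolding X_def ld_orbit_def by blast
  moreover have "al ` X \<subseteq> allA_rel\<^sup>* `` {w}"
  proof
    fix z assume "z \<in> al ` X"
    then obtain y where y: "y \<in> X" "z = al y" by blast
    have "y \<in> H" using y ld_orbit_subset[OF perm_on_state_step w] unfolding X_def by blast
    then have "(y, al y) \<in> allA_rel" unfolding allA_rel_def by blast
    moreover have "(w, y) \<in> allA_rel\<^sup>*" using XR y by blast
    ultimately show "z \<in> allA_rel\<^sup>* `` {w}" using y by (metis Image_singleton_iff rtrancl.rtrancl_into_rtrancl)
  qed
  ultimately show "al_hull X \<subseteq> allA_rel\<^sup>* `` {w}" unfolding al_hull_def by blast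
qed

lemma allA_circles_eq: "allA_circles H sg al ov = al_hull ` (ld_orbit (state_step Epos) ` darts b)"
proof -
  have "H // allA_rel\<^sup>* = (\<lambda>x. allA_rel\<^sup>* `` {x}) ` H" unfolding quotient_def by blast
  also have "\<dots> = al_hull ` (ld_orbit (state_step Epos) ` darts b)"
  proof
    show "(\<lambda>x. allA_rel\<^sup>* `` {x}) ` H \<subseteq> al_hull ` (ld_orbit (state_step Epos) ` darts b)"
    proof
      fix C assume "C \<in> (\<lambda>x. allA_rel\<^sup>* `` {x}) ` H"
      then obtain x where x: "x \<in> H" "C = al_hull (ld_orbit (state_step Epos) x)"
        using allA_class_eq by blast
      show "C \<in> al_hull ` (ld_orbit (state_step Epos) ` darts b)"
      proof (cases "sh x = b")
        case True
        then show ?thesis using x unfolding darts_def by blast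
      next
        case False
        then have "al x \<in> darts b" unfolding darts_def using x by simp
        moreover have "al_hull (ld_orbit (state_step Epos) (al x)) = C"
          using al_image_al_image[OF ld_orbit_subset[OF perm_on_state_step x(1)]]
          unfolding x(2) al_hull_def state_orbit_al[OF x(1)] by blast
        ultimately show ?thesis by (metis imageI)
      qed
    qed
    show "al_hull ` (ld_orbit (state_step Epos) ` darts b) \<subseteq> (\<lambda>x. allA_rel\<^sup>* `` {x}) ` H"
      using allA_class_eq darts_subset by blast
  qed
  finally show ?thesis unfolding allA_circles_eq_quotient .
qed

lemma state_orbit_darts: "x \<in> darts b \<Longrightarrow> ld_orbit (state_step T) x \<subseteq> darts b"
  using ld_orbit_subset[OF perm_on_state_step_darts] .

lemma al_hull_darts: "X \<subseteq> darts b \<Longrightarrow> al_hull X \<inter> darts b = X"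
  unfolding al_hull_def darts_def by auto

lemma card_isolated_circles:
  assumes R: "R \<subseteq> darts b"
  shows "card {C \<in> allA_circles H sg al ov. C \<inter> R = {}} =
         card {X \<in> ld_orbit (state_step Epos) ` darts b. X \<inter> R = {}}"
proof -
  define Orb where "Orb = ld_orbit (state_step Epos) ` darts b"
  have OW: "X \<subseteq> darts b" if "X \<in> Orb" for X using that state_orbit_darts unfolding Orb_def by blast
  have PR: "al_hull X \<inter> R = X \<inter> R" if "X \<in> Orb" for X
    using al_hull_darts[OF OW[OF that]] R by blast
  have eq: "{C \<in> allA_circles H sg al ov. C \<inter> R = {}} = al_hull ` {X \<in> Orb. X \<inter> R = {}}"
    unfolding allA_circles_eq[of b] Orb_def[symmetric] using PR by auto
  have inj: "inj_on al_hull {X \<in> Orb. X \<inter> R = {}}"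
  proof (rule inj_onI)
    fix X Y assume "X \<in> {X \<in> Orb. X \<inter> R = {}}" "Y \<in> {X \<in> Orb. X \<inter> R = {}}" "al_hull X = al_hull Y"
    then show "X = Y" using al_hull_darts OW by (metis (no_types, lifting) mem_Collect_eq)
  qed
  show ?thesis using eq card_image[OF inj] unfolding Orb_def by simp
qed

lemma card_ribbon_face_orbits:
  "card (ld_orbit (rrot H sg al ov sh ou S \<circ> redge H sg al ov sh ou) ` rsub H sg al sh ou S)
    = card {X \<in> ld_orbit (state_step (flip S)) ` darts (\<not> sh ou). X \<inter> rsub H sg al sh ou S \<noteq> {}}"
proof -
  define R where "R = rsub H sg al sh ou S"
  define q where "q = state_step (flip S)"
  have RW: "R \<subseteq> darts (\<not> sh ou)" unfolding R_def by (rule rsub_subset)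
  have q: "perm_on q (darts (\<not> sh ou))" unfolding q_def by (rule perm_on_state_step_darts)
  have "ld_orbit (first_return q R) d = ld_orbit (rrot H sg al ov sh ou S \<circ> redge H sg al ov sh ou) d"
    if d: "d \<in> R" for d
  proof (rule ld_orbit_cong_invariant[OF d])
    show "\<forall>z\<in>R. first_return q R z \<in> R" using first_return_mem[OF q RW] by blast
    show "\<forall>z\<in>R. first_return q R z = (rrot H sg al ov sh ou S \<circ> redge H sg al ov sh ou) z"
      using rrot_redge unfolding R_def q_def by simp
  qed
  then have "ld_orbit (rrot H sg al ov sh ou S \<circ> redge H sg al ov sh ou) ` R = ld_orbit (first_return q R) ` R"
    by (metis (no_types, lifting) image_cong)
  then show ?thesis using card_orbits_first_return[OF q RW] unfolding R_def q_def by simp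
qed

text \<open>The faces of the ribbon subgraph \<open>S\<close> are the state circles of \<open>flip S\<close>: those meeting an edge
  of \<open>S\<close> are traced by the face permutation, the others are the untouched circles of the all-A
  state.\<close>

lemma ribbon_faces_eq_ncircles:
  "ribbon_faces H sg al ov sh ou S = ncircles (\<not> sh ou) (flip S)"
proof -
  define b where "b = (\<not> sh ou)"
  define R where "R = rsub H sg al sh ou S"
  define Orb where "Orb = ld_orbit (state_step (flip S)) ` darts b"
  have RW: "R \<subseteq> darts b" unfolding R_def b_def by (rule rsub_subset)
  have "\<forall>z\<in>darts b - R. state_step Epos z = state_step (flip S) z"
  proof
    fix z assume z: "z \<in> darts b - R"
    then have "z \<in> H" using darts_subset by blast
    then show "state_step Epos z = state_step (flip S) z"
      using state_step_flip_not_rsub[of z ou S] stepA_eq_state_step z unfolding R_def b_def by simp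
  qed
  then have "{X \<in> ld_orbit (state_step Epos) ` darts b. X \<inter> R = {}} = {X \<in> Orb. X \<inter> R = {}}"
    unfolding Orb_def by (rule orbits_avoiding_eq[OF perm_on_state_step_darts perm_on_state_step_darts])
  then have isolated: "card {C \<in> allA_circles H sg al ov. C \<inter> R = {}} = card {X \<in> Orb. X \<inter> R = {}}"
    using card_isolated_circles[OF RW] by simp
  have "finite Orb" unfolding Orb_def using perm_on_state_step_darts unfolding perm_on_def by simp
  then have "card {X \<in> Orb. X \<inter> R \<noteq> {}} + card {X \<in> Orb. X \<inter> R = {}} = card Orb"
    by (subst card_Un_disjoint[symmetric]) (auto intro: arg_cong[where f=card])
  then show ?thesis unfolding ribbon_faces_def ncircles_def R_def[symmetric]
    using card_ribbon_face_orbits[of ou S, folded R_def] isolated unfolding Orb_def b_def by simp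
qed

section \<open>Spanning trees and quasi-trees\<close>

lemma tait_connected_iff_ncomps: "tait_connected H sg al sh T \<longleftrightarrow> ncomps T = 1"
  unfolding ncomps_def card_rel_components_eq_1[OF sym_tadj TV_nonempty]
  unfolding tait_connected_def tadj_def ..

lemma ncomps_pos: "1 \<le> ncomps T"
  unfolding ncomps_def using card_rel_components_pos[OF finite_TV TV_nonempty] .

lemma ncomps_insert_le:
  assumes e: "e \<in> crossings H sg"
  shows "ncomps T \<le> ncomps (insert e T) + 1"
proof -
  obtain y where y: "y \<in> H" "e = crossing y" using e crossings_eq_image by blast
  show ?thesis
    using ncomps_insert_connected[OF y(1)] ncomps_insert_disconnected[OF y(1)] unfolding y(2)
    by (cases "(tvertex y, tvertex (sg (sg y))) \<in> (tadj T)\<^sup>*") auto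
qed

lemma card_TV_le:
  assumes "finite T" "T \<subseteq> crossings H sg"
  shows "card TV \<le> ncomps T + card T"
  using assms
proof (induction T rule: finite_induct)
  case empty then show ?case using ncomps_empty by simp
next
  case (insert e T)
  then show ?case using ncomps_insert_le[of e T] by simp
qed

lemma ncomps_add_card_forest:
  assumes T: "T \<subseteq> crossings H sg"
    and forest: "\<And>y. y \<in> H \<Longrightarrow> crossing y \<in> T \<Longrightarrow>
      (tvertex y, tvertex (sg (sg y))) \<notin> (tadj (T - {crossing y}))\<^sup>*"
    and fin: "finite T'" and sub: "T' \<subseteq> T"
  shows "ncomps T' + card T' = card TV"
  using fin sub
proof (induction T' rule: finite_induct)
  case empty then show ?case using ncomps_empty by simp
next
  case (insert e T')
  obtain y where y: "y \<in> H" "e = crossing y" using insert.prems T crossings_eq_image by blast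
  have "tadj T' \<subseteq> tadj (T - {e})" using insert unfolding tadj_def by blast
  then have "(tvertex y, tvertex (sg (sg y))) \<notin> (tadj T')\<^sup>*"
    using forest[OF y(1)] insert.prems y(2) rtrancl_mono by blast
  then have "ncomps (insert e T') + 1 = ncomps T'"
    using ncomps_insert_disconnected[OF y(1)] y(2) by simp
  then show ?case using insert by simp
qed

lemma tait_spanning_tree_iff:
  assumes T: "T \<subseteq> crossings H sg"
  shows "tait_spanning_tree H sg al sh T \<longleftrightarrow> ncomps T = 1 \<and> card T + 1 = card TV"
proof
  have finT: "finite T" using T finite_crossings finite_subset by blast
  {
    assume sp: "tait_spanning_tree H sg al sh T"
    then have conn: "ncomps T = 1" using tait_connected_iff_ncomps unfolding tait_spanning_tree_def by blast
    have "(tvertex y, tvertex (sg (sg y))) \<notin> (tadj (T - {crossing y}))\<^sup>*"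
      if "y \<in> H" "crossing y \<in> T" for y
    proof
      assume "(tvertex y, tvertex (sg (sg y))) \<in> (tadj (T - {crossing y}))\<^sup>*"
      then have "ncomps (insert (crossing y) (T - {crossing y})) = ncomps (T - {crossing y})"
        by (rule ncomps_insert_connected[OF that(1)])
      moreover have "insert (crossing y) (T - {crossing y}) = T" using that(2) by blast
      ultimately have "ncomps (T - {crossing y}) = 1" using conn by simp
      then show False using sp that(2) tait_connected_iff_ncomps unfolding tait_spanning_tree_def by blast
    qed
    then have "ncomps T + card T = card TV" using ncomps_add_card_forest[OF T _ finT] by blast
    then show "ncomps T = 1 \<and> card T + 1 = card TV" using conn by simp
  }
  assume a: "ncomps T = 1 \<and> card T + 1 = card TV"
  have "\<not> tait_connected H sg al sh (T - {e})" if e: "e \<in> T" for e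
  proof
    assume "tait_connected H sg al sh (T - {e})"
    moreover have "card TV \<le> ncomps (T - {e}) + card (T - {e})" using card_TV_le finT T by blast
    moreover have "card (T - {e}) + 1 = card T" using e finT card.remove by fastforce
    ultimately show False using a tait_connected_iff_ncomps by simp
  qed
  then show "tait_spanning_tree H sg al sh T"
    unfolding tait_spanning_tree_def using T a tait_connected_iff_ncomps by blast
qed

lemma flip_subset: "Q \<subseteq> crossings H sg \<Longrightarrow> flip Q \<subseteq> crossings H sg"
  unfolding flip_def Epos_def by blast

lemma flip_flip: "flip (flip Q) = Q"
  unfolding flip_def by blast

text \<open>By the circle formula a state has a single circle exactly when its Tait subgraph is connected
  with \<open>card TV - 1\<close> edges.\<close>

lemma quasi_tree_iff:
  "quasi_tree H sg al ov sh ou Q \<longleftrightarrow> Q \<subseteq> crossings H sg \<and> tait_spanning_tree H sg al sh (flip Q)"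
proof (cases "Q \<subseteq> crossings H sg")
  case True
  then have T: "flip Q \<subseteq> crossings H sg" by (rule flip_subset)
  have "card TV \<le> ncomps (flip Q) + card (flip Q)"
    using card_TV_le[OF finite_subset[OF T finite_crossings] T] .
  then have "ribbon_faces H sg al ov sh ou Q = 1 \<longleftrightarrow> ncomps (flip Q) = 1 \<and> card (flip Q) + 1 = card TV"
    using ribbon_faces_eq_ncircles[of ou Q] ncircles_formula[OF T, of "\<not> sh ou"] ncomps_pos[of "flip Q"]
    by linarith
  then show ?thesis unfolding quasi_tree_def using True tait_spanning_tree_iff[OF T] by blast
qed (simp add: quasi_tree_def)

lemma bij_betw_flip:
  "bij_betw flip {Q. quasi_tree H sg al ov sh ou Q} {T. tait_spanning_tree H sg al sh T}"
proof (rule bij_betw_byWitness[where f'=flip])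
  show "flip ` {Q. quasi_tree H sg al ov sh ou Q} \<subseteq> {T. tait_spanning_tree H sg al sh T}"
    using quasi_tree_iff by blast
  show "flip ` {T. tait_spanning_tree H sg al sh T} \<subseteq> {Q. quasi_tree H sg al ov sh ou Q}"
  proof
    fix Q assume "Q \<in> flip ` {T. tait_spanning_tree H sg al sh T}"
    then obtain T where T: "tait_spanning_tree H sg al sh T" "Q = flip T" by blast
    then have "Q \<subseteq> crossings H sg" using flip_subset unfolding tait_spanning_tree_def by blast
    moreover have "tait_spanning_tree H sg al sh (flip Q)" using T flip_flip by simp
    ultimately show "Q \<in> {Q. quasi_tree H sg al ov sh ou Q}" using quasi_tree_iff by blast
  qed
qed (simp_all add: flip_flip)

text \<open>A quasi-tree \<open>Q\<close> has genus \<open>(1 - V_ribbon + |Q|)/2\<close>, its tree \<open>flip Q\<close> has \<open>|Epos - Q|\<close>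
  positive edges and \<open>card TV - 1 = |Epos - Q| + |Q - Epos|\<close> edges in all.\<close>

lemma positive_edges_add_genus:
  assumes "quasi_tree H sg al ov sh ou Q"
  shows "real (card {c \<in> flip Q. tait_positive ov sh c}) + qt_genus H sg al ov Q
    = (real (card TV) + real (E_plus H sg ov sh) - real (V_ribbon H sg al ov)) / 2"
proof -
  have Q: "Q \<subseteq> crossings H sg" and sp: "tait_spanning_tree H sg al sh (flip Q)"
    using assms quasi_tree_iff by blast+
  have cT: "card (flip Q) + 1 = card TV" using tait_spanning_tree_iff[OF flip_subset[OF Q]] sp by blast
  have finP: "finite Epos" unfolding Epos_def using finite_crossings by simp
  have finQ: "finite Q" using finite_subset[OF Q finite_crossings] .
  have pos: "{c \<in> flip Q. tait_positive ov sh c} = Epos - Q"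
    unfolding flip_def Epos_def using Q by blast
  have "card (flip Q) = card (Epos - Q) + card (Q - Epos)"
    unfolding flip_def by (rule card_Un_disjoint) (use finP finQ in auto)
  moreover have "card Q = card (Q \<inter> Epos) + card (Q - Epos)"
    using card_Int_Diff[OF finQ] .
  moreover have "card Epos = card (Q \<inter> Epos) + card (Epos - Q)"
    using card_Int_Diff[OF finP, of Q] by (simp add: Int_commute)
  moreover have "E_plus H sg ov sh = card Epos" unfolding E_plus_def Epos_def ..
  ultimately show ?thesis unfolding pos qt_genus_def using cT by (simp add: field_simps)
qed

end

theorem theorem1:
  fixes H :: "'d set" and sg al :: "'d \<Rightarrow> 'd" and ov sh :: "'d \<Rightarrow> bool" and ou :: 'd
  assumes "link_diagram H sg al ov"
    and "ou \<in> H"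
    and "checkerboard H sg al sh"
    and "E_plus H sg ov sh \<ge> E_minus H sg ov sh"
  shows "\<exists>f. bij_betw f {Q. quasi_tree H sg al ov sh ou Q} {T. tait_spanning_tree H sg al sh T} \<and>
    (\<forall>Q. quasi_tree H sg al ov sh ou Q \<longrightarrow>
       real (card {c \<in> f Q. tait_positive ov sh c}) + qt_genus H sg al ov Q
       = (real (card (tait_vertices H sg al sh)) + real (E_plus H sg ov sh)
          - real (V_ribbon H sg al ov)) / 2)"
proof -
  interpret shaded_diagram H sg al ov sh using assms(1,3) by unfold_locales
  show ?thesis using bij_betw_flip positive_edges_add_genus by blast
qed

end
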